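(* Let $\overline{\mathsf{HAL}}^{pa},\overline{\mathsf{HAL}}^{p},\overline{\mathsf{HAL}}^{a},\overline{\mathsf{HAL}}$ be the symmetric functions uniquely determined by $$\overline{\mathsf{HAL}}^{pa}=p_1\cdot\Bigl(\Bigl[\frac{p_1}{1+p_1}\Bigr]\circ\operatorname{Comm}\circ[p_1-\overline{\mathsf{HAL}}^{pa}]\Bigr),\qquad \overline{\mathsf{HAL}}^{p}=p_1\cdot\Bigl([\Sigma\operatorname{Lie}]\circ\operatorname{Comm}\circ[p_1-\overline{\mathsf{HAL}}^{pa}]\Bigr),$$ $$\overline{\mathsf{HAL}}^{a}=[\operatorname{Comm}-p_1]\circ[p_1-\overline{\mathsf{HAL}}^{pa}],\qquad \overline{\mathsf{HAL}}=\overline{\mathsf{HAL}}^{p}+\overline{\mathsf{HAL}}^{a}-\overline{\mathsf{HAL}}^{pa}.$$ Let $M$ be the symmetric function defined by $M+1=p_1+p_1\operatorname{PreLie}+p_1/\operatorname{PreLie}$. Then $\overline{\mathsf{HAL}}=-\Sigma M$.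
   Context: Symmetric functions are formal power series in the power sums $p_1,p_2,\dots$ over $\mathbb{Q}$. $\circ$ denotes plethysm: $p_k\circ f$ replaces each $p_j$ in $f$ by $p_{jk}$ (rational constants fixed), and $g\circ f$ substitutes $p_k\circ f$ for $p_k$ in $g$. The suspension is $\Sigma f=-f(-p_1,-p_2,-p_3,\dots)$. $\operatorname{Comm}=\exp\bigl(\sum_{k\ge1}p_k/k\bigr)-1$; $\operatorname{Lie}=\sum_{k\ge1}\frac{\mu(k)}{k}\bigl(-\ln(1-p_k)\bigr)$ is the Frobenius characteristic of the Lie operad. $\operatorname{PreLie}$ is the Frobenius characteristic of the permutation representations of $\mathfrak{S}_n$ on labelled rooted trees on $\{1,\dots,n\}$, $n\ge1$; equivalently the unique symmetric function without constant term with $\operatorname{PreLie}=p_1(1+\operatorname{Comm}\circ\operatorname{PreLie})$. (Note $p_1/\operatorname{PreLie}=1/(1+\operatorname{Comm}\circ\operatorname{PreLie})$ is a power series.) The symmetric functions $\overline{\mathsf{HAL}}$ etc. are the specialisations at $t=1$ of functions $\mathsf{HAL}$ defined with a $t$-suspension; the definitions above are these specialisations written directly. *)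

theory Defs
  imports Complex_Main "HOL-Library.Multiset" "HOL-Computational_Algebra.Primes"
    "HOL-Computational_Algebra.Squarefree"
begin

text \<open>Symmetric functions over Q as formal power series in the power sums p_1, p_2, ...
  A monomial p_{l_1} ... p_{l_r} (a partition) is encoded as the multiset of natural numbers
  {l_1 - 1, ..., l_r - 1}: the element i of a multiset stands for the power sum p_(Suc i).\<close>

type_synonym sf = "nat multiset \<Rightarrow> rat"

definition sf_wt :: "nat multiset \<Rightarrow> nat" where
  "sf_wt m = sum_mset (image_mset Suc m)"

definition sf_const :: "rat \<Rightarrow> sf" where
  "sf_const c = (\<lambda>m. if m = {#} then c else 0)"

text \<open>the power sum p_k (k \<ge> 1)\<close>
definition sf_p :: "nat \<Rightarrow> sf" where
  "sf_p k = (\<lambda>m. if m = {# k - 1 #} then 1 else 0)"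

definition sf_add :: "sf \<Rightarrow> sf \<Rightarrow> sf" where
  "sf_add f g = (\<lambda>m. f m + g m)"

definition sf_sub :: "sf \<Rightarrow> sf \<Rightarrow> sf" where
  "sf_sub f g = (\<lambda>m. f m - g m)"

definition sf_neg :: "sf \<Rightarrow> sf" where
  "sf_neg f = (\<lambda>m. - f m)"

definition sf_mult :: "sf \<Rightarrow> sf \<Rightarrow> sf" where
  "sf_mult f g = (\<lambda>m. \<Sum>a \<in> {a. a \<subseteq># m}. f a * g (m - a))"

text \<open>p_k \<circ> f: replace each p_j in f by p_(j*k)  (k \<ge> 1)\<close>
definition sf_pleth_p :: "nat \<Rightarrow> sf \<Rightarrow> sf" where
  "sf_pleth_p k f = (\<lambda>m. \<Sum>a \<in> {a. image_mset (\<lambda>i. Suc i * k - 1) a = m}. f a)"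

definition sf_pleth_mono :: "nat multiset \<Rightarrow> sf \<Rightarrow> sf" where
  "sf_pleth_mono lam f =
     foldr sf_mult (map (\<lambda>i. sf_pleth_p (Suc i) f) (sorted_list_of_multiset lam)) (sf_const 1)"

text \<open>plethysm g \<circ> f = sum over monomials p_lambda of g(lambda) * prod_{i in lambda} (p_i \<circ> f);
  meant for f without constant term, in which case only monomials lambda of weight at most
  the weight of m contribute to the coefficient of m.\<close>
definition sf_pleth :: "sf \<Rightarrow> sf \<Rightarrow> sf" where
  "sf_pleth g f = (\<lambda>m. \<Sum>lam \<in> {lam. sf_wt lam \<le> sf_wt m}. g lam * sf_pleth_mono lam f m)"

text \<open>suspension: Sigma f = - f(-p_1, -p_2, ...)\<close>
definition sf_susp :: "sf \<Rightarrow> sf" where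
  "sf_susp f = (\<lambda>m. - ((-1) ^ size m) * f m)"

text \<open>Comm = exp(sum_k p_k / k) - 1; coefficient of p_lambda is 1 / z_lambda\<close>
definition sf_z :: "nat multiset \<Rightarrow> nat" where
  "sf_z m = (\<Prod>i \<in> set_mset m. Suc i ^ count m i * fact (count m i))"

definition Comm :: sf where
  "Comm = (\<lambda>m. if m = {#} then 0 else 1 / of_nat (sf_z m))"

text \<open>the series p_1/(1+p_1) = sum_{n\<ge>1} (-1)^(n-1) p_1^n\<close>
definition sf_p1_over_1_plus_p1 :: sf where
  "sf_p1_over_1_plus_p1 =
     (\<lambda>m. if m \<noteq> {#} \<and> set_mset m = {0} then (-1) ^ (size m - 1) else 0)"

definition moebius :: "nat \<Rightarrow> int" where
  "moebius k = (if k > 0 \<and> squarefree k then (-1) ^ card (prime_factors k) else 0)"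

text \<open>Lie = sum_{k\<ge>1} mu(k)/k * (-ln(1-p_k)) = sum_{k\<ge>1} sum_{n\<ge>1} mu(k)/(k n) p_k^n\<close>
definition Lie :: sf where
  "Lie = (\<lambda>m. if m \<noteq> {#} \<and> (\<exists>j. set_mset m = {j})
              then of_int (moebius (Suc (Min (set_mset m)))) /
                   (of_nat (Suc (Min (set_mset m))) * of_nat (size m))
              else 0)"

end

theory Submission
  imports Defs "HOL-Library.Groups_Big_Fun"
begin

(* Work in the ring of symmetric functions and put X = p_1 - HAL^pa and C = Comm o X.
   Since (1 + C) (p_1/(1 + p_1) o C) = C, the equation defining HAL^pa says X (1 + C) = p_1.
   Sigma Lie is the plethystic inverse of Comm: Sigma Lie o C = sum_k mu(k)/k ln (1 + p_k o C),
   and as 1 + C = exp (sum_j (p_j o X)/j), the Euler operator E (multiplying the degree n part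
   by n) gives E (Sigma Lie o C) = sum_k mu(k) p_k o (sum_j p_j o E X) = E X by Moebius
   inversion. Hence HAL^p = p_1 X, HAL^a = C - X and HAL = p_1 X + C - p_1.
   Flipping the signs of all p_k in PreLie = p_1 (1 + Comm o PreLie) and using
   (1 + Comm o W) (1 + Comm o (-W)) = 1 shows that -PreLie(-p_1, -p_2, ...) solves the same
   equation X (1 + Comm o X) = p_1, whose solution without constant term is unique. Then
   Q(-p_1, -p_2, ...) = 1 + C, and M(-p_1, -p_2, ...) = p_1 X + C - p_1 = HAL. *)

section \<open>Weights of monomials\<close>

lemma finite_msets_bounded:
  assumes "finite S"
  shows "finite {a :: 'a multiset. set_mset a \<subseteq> S \<and> size a \<le> n}"
proof -
  have "{a :: 'a multiset. set_mset a \<subseteq> S \<and> size a \<le> n} \<subseteq> mset ` {xs. set xs \<subseteq> S \<and> length xs \<le> n}"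
    by (auto simp: image_iff) (metis ex_mset set_mset_mset size_mset)
  moreover have "finite {xs. set xs \<subseteq> S \<and> length xs \<le> n}"
    using finite_lists_length_le[OF assms] by simp
  ultimately show ?thesis
    by (meson finite_imageI finite_subset)
qed

lemma finite_submultisets: "finite {a. a \<subseteq># (m :: 'a multiset)}"
  by (rule finite_subset[OF _ finite_msets_bounded[of "set_mset m" "size m"]])
     (auto dest: set_mset_mono size_mset_mono)

lemma eq_replicate_mset_if_set_mset_eq_singleton:
  assumes "set_mset lam = {j}"
  shows "lam = replicate_mset (Suc (size lam - 1)) j"
proof -
  have "size lam \<noteq> 0"
    using assms by auto
  then have "Suc (size lam - 1) = size lam"
    by arith
  then show ?thesis
    using set_mset_subset_singletonD[of lam j] assms by simp
qed

lemma sf_wt_empty [simp]: "sf_wt {#} = 0"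
  by (simp add: sf_wt_def)

lemma sf_wt_add_mset [simp]: "sf_wt (add_mset x a) = Suc x + sf_wt a"
  by (simp add: sf_wt_def)

lemma sf_wt_plus [simp]: "sf_wt (a + b) = sf_wt a + sf_wt b"
  by (simp add: sf_wt_def)

lemma sf_wt_eq_0_iff [simp]: "sf_wt a = 0 \<longleftrightarrow> a = {#}"
  by (induct a) auto

lemma size_le_sf_wt: "size a \<le> sf_wt a"
  by (induct a) auto

lemma less_sf_wt_if_in: "x \<in># a \<Longrightarrow> x < sf_wt a"
  by (induct a) auto

lemma finite_sf_wt_le: "finite {a. sf_wt a \<le> n}"
  by (rule finite_subset[OF _ finite_msets_bounded[of "{..<n}" n]])
     (auto dest: less_sf_wt_if_in intro: order.trans[OF size_le_sf_wt])

definition splittings :: "'a multiset \<Rightarrow> ('a multiset \<times> 'a multiset) set" where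
  "splittings m = {p. fst p + snd p = m}"

lemma mem_splittings [simp]: "p \<in> splittings m \<longleftrightarrow> fst p + snd p = m"
  by (simp add: splittings_def)

lemma splittings_eq_image: "splittings m = (\<lambda>a. (a, m - a)) ` {a. a \<subseteq># m}"
  by (auto simp: image_iff intro!: exI[of _ "fst _"])

lemma finite_splittings [simp]: "finite (splittings m)"
  by (simp add: splittings_eq_image finite_submultisets)

lemma splittings_empty: "splittings {#} = {({#}, {#})}"
  by auto

lemma sf_wt_le_if_in_splittings:
  "p \<in> splittings m \<Longrightarrow> sf_wt (fst p) \<le> sf_wt m \<and> sf_wt (snd p) \<le> sf_wt m"
  by auto

section \<open>The ring of symmetric functions\<close>

lemma sf_mult_eq_sum_splittings: "sf_mult f g m = (\<Sum>p\<in>splittings m. f (fst p) * g (snd p))"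
  unfolding sf_mult_def splittings_eq_image
  by (subst sum.reindex) (auto simp: inj_on_def)

lemma sum_splittings_swap:
  "(\<Sum>p\<in>splittings m. h (fst p) (snd p)) = (\<Sum>p\<in>splittings m. h (snd p) (fst p))"
  by (rule sum.reindex_bij_witness[of _ "\<lambda>(a, b). (b, a)" "\<lambda>(a, b). (b, a)"]) auto

lemma sum_splittings_left_eq_triples:
  "(\<Sum>p\<in>splittings m. \<Sum>q\<in>splittings (fst p). h (fst q) (snd q) (snd p)) =
   (\<Sum>t\<in>{t. fst t + fst (snd t) + snd (snd t) = m}. h (fst t) (fst (snd t)) (snd (snd t)))"
  by (subst sum.Sigma, simp, simp)
     (rule sum.reindex_bij_witness[of _ "\<lambda>(a, b, c). ((a + b, c), (a, b))" "\<lambda>((c, d), (a, b)). (a, b, d)"],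
      auto)

lemma sum_splittings_right_eq_triples:
  "(\<Sum>p\<in>splittings m. \<Sum>q\<in>splittings (snd p). h (fst p) (fst q) (snd q)) =
   (\<Sum>t\<in>{t. fst t + fst (snd t) + snd (snd t) = m}. h (fst t) (fst (snd t)) (snd (snd t)))"
  by (subst sum.Sigma, simp, simp)
     (rule sum.reindex_bij_witness[of _ "\<lambda>(a, b, c). ((a, b + c), (b, c))" "\<lambda>((a, d), (b, c)). (a, b, c)"],
      auto simp: add.assoc)

lemma sf_mult_assoc: "sf_mult (sf_mult a b) c = sf_mult a (sf_mult b c)"
proof
  fix m
  show "sf_mult (sf_mult a b) c m = sf_mult a (sf_mult b c) m"
    unfolding sf_mult_eq_sum_splittings sum_distrib_right sum_distrib_left
    using sum_splittings_left_eq_triples[where h = "\<lambda>x y z. a x * b y * c z"]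
      sum_splittings_right_eq_triples[where h = "\<lambda>x y z. a x * b y * c z"]
    by (simp add: mult.assoc)
qed

lemma sf_mult_commute: "sf_mult f g = sf_mult g f"
  by (simp add: fun_eq_iff sf_mult_eq_sum_splittings, subst sum_splittings_swap, simp add: mult.commute)

lemma sf_mult_const_left: "sf_mult (sf_const c) f = (\<lambda>m. c * f m)"
proof
  fix m
  have "sf_mult (sf_const c) f m = (\<Sum>p\<in>splittings m. if p = ({#}, m) then c * f m else 0)"
    unfolding sf_mult_eq_sum_splittings by (intro sum.cong refl) (auto simp: sf_const_def)
  also have "\<dots> = c * f m"
    by simp
  finally show "sf_mult (sf_const c) f m = c * f m" .
qed

typedef symfun = "UNIV :: sf set"
  by simp

setup_lifting type_definition_symfun

lift_definition coeff :: "symfun \<Rightarrow> nat multiset \<Rightarrow> rat" is "\<lambda>f. f" .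

lemma symfun_eqI: "(\<And>m. coeff f m = coeff g m) \<Longrightarrow> f = g"
  by transfer auto

instantiation symfun :: comm_ring_1
begin

lift_definition zero_symfun :: symfun is "sf_const 0" .
lift_definition one_symfun :: symfun is "sf_const 1" .
lift_definition plus_symfun :: "symfun \<Rightarrow> symfun \<Rightarrow> symfun" is sf_add .
lift_definition minus_symfun :: "symfun \<Rightarrow> symfun \<Rightarrow> symfun" is sf_sub .
lift_definition uminus_symfun :: "symfun \<Rightarrow> symfun" is sf_neg .
lift_definition times_symfun :: "symfun \<Rightarrow> symfun \<Rightarrow> symfun" is sf_mult .

instance
proof
  fix a b c :: symfun
  show "a * b * c = a * (b * c)"
    by transfer (rule sf_mult_assoc)
  show "a * b = b * a"
    by transfer (rule sf_mult_commute)
  show "1 * a = a"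
    by transfer (simp add: sf_mult_const_left)
  show "(a + b) * c = a * c + b * c"
    by transfer (simp add: fun_eq_iff sf_mult_eq_sum_splittings sf_add_def algebra_simps sum.distrib)
  show "a + b + c = a + (b + c)"
    by transfer (simp add: sf_add_def add.assoc)
  show "a + b = b + a"
    by transfer (simp add: sf_add_def add.commute)
  show "0 + a = a"
    by transfer (simp add: sf_add_def sf_const_def)
  show "- a + a = 0"
    by transfer (simp add: sf_add_def sf_neg_def sf_const_def)
  show "a - b = a + - b"
    by transfer (simp add: sf_add_def sf_neg_def sf_sub_def)
  show "(0 :: symfun) \<noteq> 1"
    by transfer (auto simp: sf_const_def fun_eq_iff)
qed

end

lemma coeff_0 [simp]: "coeff 0 m = 0"
  by transfer (simp add: sf_const_def)

lemma coeff_1: "coeff 1 m = (if m = {#} then 1 else 0)"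
  by transfer (simp add: sf_const_def)

lemma coeff_add [simp]: "coeff (f + g) m = coeff f m + coeff g m"
  by transfer (simp add: sf_add_def)

lemma coeff_diff [simp]: "coeff (f - g) m = coeff f m - coeff g m"
  by transfer (simp add: sf_sub_def)

lemma coeff_minus [simp]: "coeff (- f) m = - coeff f m"
  by transfer (simp add: sf_neg_def)

lemma coeff_mult: "coeff (f * g) m = (\<Sum>p\<in>splittings m. coeff f (fst p) * coeff g (snd p))"
  by transfer (simp add: sf_mult_eq_sum_splittings)

lemma coeff_mult_empty: "coeff (f * g) {#} = coeff f {#} * coeff g {#}"
  by (simp add: coeff_mult splittings_empty)

lift_definition symfun_const :: "rat \<Rightarrow> symfun" is sf_const .

lift_definition power_sum :: "nat \<Rightarrow> symfun" is sf_p .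

lemma coeff_symfun_const: "coeff (symfun_const c) m = (if m = {#} then c else 0)"
  by transfer (simp add: sf_const_def)

lemma coeff_power_sum: "coeff (power_sum k) m = (if m = {# k - 1 #} then 1 else 0)"
  by transfer (simp add: sf_p_def)

lemma coeff_symfun_const_mult: "coeff (symfun_const c * f) m = c * coeff f m"
  by transfer (simp add: sf_mult_const_left)

lemma symfun_const_0 [simp]: "symfun_const 0 = 0"
  by transfer simp

lemma symfun_const_1 [simp]: "symfun_const 1 = 1"
  by (rule symfun_eqI) (simp add: coeff_symfun_const coeff_1)

lemma symfun_const_add: "symfun_const (a + b) = symfun_const a + symfun_const b"
  by (rule symfun_eqI) (simp add: coeff_symfun_const)

lemma symfun_const_minus: "symfun_const (- a) = - symfun_const a"
  by (rule symfun_eqI) (simp add: coeff_symfun_const)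

lemma symfun_const_mult: "symfun_const (a * b) = symfun_const a * symfun_const b"
  by (rule symfun_eqI) (simp add: coeff_symfun_const_mult coeff_symfun_const)

lemma symfun_const_of_nat: "symfun_const (of_nat n) = of_nat n"
  by (induct n) (simp_all add: symfun_const_add)

lemma symfun_const_power: "symfun_const (a ^ n) = symfun_const a ^ n"
  by (induct n) (simp_all add: symfun_const_mult)

section \<open>Adams operations, the Euler operator and the sign flip\<close>

text \<open>In the encoding of \<open>Defs\<close> the element \<open>i\<close> stands for \<open>p\<^bsub>i+1\<^esub>\<close>, so \<open>scale_index k i\<close> stands for
  \<open>p\<^bsub>k(i+1)\<^esub>\<close> and \<open>scale_parts k \<lambda>\<close> is the partition \<open>k\<lambda>\<close>.\<close>

definition scale_index :: "nat \<Rightarrow> nat \<Rightarrow> nat" where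
  "scale_index k i = Suc i * k - 1"

abbreviation scale_parts :: "nat \<Rightarrow> nat multiset \<Rightarrow> nat multiset" where
  "scale_parts k \<equiv> image_mset (scale_index k)"

lemma Suc_scale_index: "k > 0 \<Longrightarrow> Suc (scale_index k i) = Suc i * k"
  by (simp add: scale_index_def)

lemma inj_scale_index: "k > 0 \<Longrightarrow> inj (scale_index k)"
  by (rule injI) (metis Suc_scale_index mult_right_cancel nat.inject not_gr0)

lemma inj_scale_parts: "k > 0 \<Longrightarrow> inj (scale_parts k)"
  by (simp add: inj_scale_index multiset.inj_map)

lemma scale_parts_1 [simp]: "scale_parts 1 a = a"
  by (induct a) (simp_all add: scale_index_def)

lemma scale_index_scale_index: "k > 0 \<Longrightarrow> scale_index j (scale_index k i) = scale_index (j * k) i"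
  by (cases k) (auto simp: scale_index_def algebra_simps)

lemma scale_parts_scale_parts: "k > 0 \<Longrightarrow> scale_parts j (scale_parts k a) = scale_parts (j * k) a"
  by (simp add: multiset.map_comp o_def scale_index_scale_index)

lemma sf_wt_scale_parts: "k > 0 \<Longrightarrow> sf_wt (scale_parts k a) = k * sf_wt a"
  by (induct a) (auto simp: Suc_scale_index algebra_simps)

lemma splittings_scale_parts:
  "splittings (scale_parts k a) = (\<lambda>p. (scale_parts k (fst p), scale_parts k (snd p))) ` splittings a"
proof
  show "splittings (scale_parts k a) \<subseteq> (\<lambda>p. (scale_parts k (fst p), scale_parts k (snd p))) ` splittings a"
  proof
    fix q assume "q \<in> splittings (scale_parts k a)"
    then obtain b c where "a = b + c" "fst q = scale_parts k b" "snd q = scale_parts k c"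
      by (metis image_mset_eq_plusD mem_splittings)
    then show "q \<in> (\<lambda>p. (scale_parts k (fst p), scale_parts k (snd p))) ` splittings a"
      by (intro image_eqI[of _ _ "(b, c)"]) (auto simp: prod_eq_iff)
  qed
qed auto

lift_definition adams :: "nat \<Rightarrow> symfun \<Rightarrow> symfun" is sf_pleth_p .

lemma coeff_adams: "coeff (adams k f) m = (\<Sum>a\<in>{a. scale_parts k a = m}. coeff f a)"
  by transfer (simp only: sf_pleth_p_def scale_index_def[abs_def])

lemma coeff_adams_scale_parts [simp]: "k > 0 \<Longrightarrow> coeff (adams k f) (scale_parts k a) = coeff f a"
  using inj_scale_parts[of k] by (simp add: coeff_adams inj_eq)

lemma coeff_adams_not_in_range:
  assumes "m \<notin> range (scale_parts k)"
  shows "coeff (adams k f) m = 0"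
proof -
  have "{a. scale_parts k a = m} = {}"
    using assms by auto
  then show ?thesis
    by (simp add: coeff_adams)
qed

lemma adams_mult:
  assumes k: "k > 0"
  shows "adams k (f * g) = adams k f * adams k g"
proof (rule symfun_eqI)
  fix m
  show "coeff (adams k (f * g)) m = coeff (adams k f * adams k g) m"
  proof (cases "m \<in> range (scale_parts k)")
    case True
    then obtain a where a: "m = scale_parts k a"
      by auto
    have "inj_on (\<lambda>p. (scale_parts k (fst p), scale_parts k (snd p))) (splittings a)"
      using inj_scale_parts[OF k] by (auto simp: inj_on_def dest: injD)
    then show ?thesis
      unfolding a coeff_mult splittings_scale_parts by (simp add: sum.reindex k coeff_mult)
  next
    case False
    have "coeff (adams k f) (fst p) * coeff (adams k g) (snd p) = 0" if "p \<in> splittings m" for p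
    proof (cases "fst p \<in> range (scale_parts k) \<and> snd p \<in> range (scale_parts k)")
      case True
      then obtain a b where "fst p = scale_parts k a" "snd p = scale_parts k b"
        by auto
      then have "m = scale_parts k (a + b)"
        using that by auto
      then show ?thesis
        using False by blast
    qed (auto simp: coeff_adams_not_in_range)
    then have "coeff (adams k f * adams k g) m = 0"
      unfolding coeff_mult by (rule sum.neutral[OF ballI])
    then show ?thesis
      using False by (simp add: coeff_adams_not_in_range)
  qed
qed

lemma adams_add: "adams k (f + g) = adams k f + adams k g"
  by (rule symfun_eqI) (simp add: coeff_adams sum.distrib)

lemma adams_minus: "adams k (- f) = - adams k f"
  by (rule symfun_eqI) (simp add: coeff_adams sum_negf)

lemma adams_symfun_const:
  assumes k: "k > 0"
  shows "adams k (symfun_const c) = symfun_const c"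
proof (rule symfun_eqI)
  fix m
  show "coeff (adams k (symfun_const c)) m = coeff (symfun_const c) m"
  proof (cases "m \<in> range (scale_parts k)")
    case True
    then obtain a where "m = scale_parts k a"
      by auto
    then show ?thesis
      using k by (simp add: coeff_symfun_const)
  next
    case False
    then have "m \<noteq> {#}"
      by (metis image_mset_empty rangeI)
    then show ?thesis
      using False by (simp add: coeff_adams_not_in_range coeff_symfun_const)
  qed
qed

lemma adams_1: "k > 0 \<Longrightarrow> adams k 1 = 1"
  using adams_symfun_const[of k 1] by simp

lemma adams_Suc_0 [simp]: "adams (Suc 0) f = f"
  by (rule symfun_eqI) (metis One_nat_def coeff_adams_scale_parts scale_parts_1 zero_less_one)

lemma adams_adams:
  assumes "j > 0" "k > 0"
  shows "adams j (adams k f) = adams (j * k) f"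
proof (rule symfun_eqI)
  fix m
  show "coeff (adams j (adams k f)) m = coeff (adams (j * k) f) m"
  proof (cases "m \<in> range (scale_parts (j * k))")
    case True
    then obtain a where a: "m = scale_parts (j * k) a"
      by auto
    have "coeff (adams j (adams k f)) (scale_parts j (scale_parts k a)) = coeff f a"
      using assms by simp
    then show ?thesis
      using assms by (simp add: a scale_parts_scale_parts)
  next
    case False
    then have "b \<notin> range (scale_parts k)" if "m = scale_parts j b" for b
      using that assms(2) by (auto simp: scale_parts_scale_parts)
    then show ?thesis
      using False assms(1)
      by (cases "m \<in> range (scale_parts j)") (auto simp: coeff_adams_not_in_range)
  qed
qed

lift_definition euler :: "symfun \<Rightarrow> symfun" is "\<lambda>f m. of_nat (sf_wt m) * f m" .

lemma coeff_euler: "coeff (euler f) m = of_nat (sf_wt m) * coeff f m"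
  by transfer simp

lemma euler_add [simp]: "euler (f + g) = euler f + euler g"
  by (rule symfun_eqI) (simp add: coeff_euler algebra_simps)

lemma euler_minus [simp]: "euler (- f) = - euler f"
  by (rule symfun_eqI) (simp add: coeff_euler)

lemma euler_symfun_const_mult: "euler (symfun_const c * f) = symfun_const c * euler f"
  by (rule symfun_eqI) (simp add: coeff_euler coeff_symfun_const_mult)

lemma euler_1 [simp]: "euler 1 = 0"
  by (rule symfun_eqI) (simp add: coeff_euler coeff_1)

lemma euler_mult: "euler (f * g) = euler f * g + f * euler g"
proof (rule symfun_eqI)
  fix m
  have "coeff (euler (f * g)) m =
      (\<Sum>p\<in>splittings m. of_nat (sf_wt (fst p) + sf_wt (snd p)) * (coeff f (fst p) * coeff g (snd p)))"
    unfolding coeff_euler coeff_mult sum_distrib_left by (intro sum.cong refl) auto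
  also have "\<dots> = (\<Sum>p\<in>splittings m. of_nat (sf_wt (fst p)) * coeff f (fst p) * coeff g (snd p)) +
      (\<Sum>p\<in>splittings m. coeff f (fst p) * (of_nat (sf_wt (snd p)) * coeff g (snd p)))"
    by (simp add: sum.distrib[symmetric] algebra_simps)
  also have "\<dots> = coeff (euler f * g + f * euler g) m"
    by (simp only: coeff_add coeff_mult coeff_euler)
  finally show "coeff (euler (f * g)) m = coeff (euler f * g + f * euler g) m" .
qed

lemma euler_power: "euler (f ^ Suc n) = of_nat (Suc n) * f ^ n * euler f"
  by (induct n) (simp_all add: euler_mult algebra_simps)

lemma euler_adams:
  assumes k: "k > 0"
  shows "euler (adams k f) = of_nat k * adams k (euler f)"
proof (rule symfun_eqI)
  fix m
  show "coeff (euler (adams k f)) m = coeff (of_nat k * adams k (euler f)) m"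
    using k
    by (cases "m \<in> range (scale_parts k)")
       (auto simp: coeff_euler sf_wt_scale_parts coeff_adams_not_in_range coeff_symfun_const_mult
         simp flip: symfun_const_of_nat)
qed

lemma euler_eqI:
  assumes "euler f = euler g" "coeff f {#} = coeff g {#}"
  shows "f = g"
proof (rule symfun_eqI)
  fix m
  show "coeff f m = coeff g m"
  proof (cases "m = {#}")
    case False
    then show ?thesis
      using arg_cong[OF assms(1), of "\<lambda>h. coeff h m"] by (simp add: coeff_euler)
  qed (use assms in simp)
qed

text \<open>\<open>sign_flip f = f(-p\<^sub>1, -p\<^sub>2, \<dots>)\<close>, so that \<open>\<Sigma> f = - sign_flip f\<close>.\<close>

lift_definition sign_flip :: "symfun \<Rightarrow> symfun" is "\<lambda>f m. (-1) ^ size m * f m" .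

lemma coeff_sign_flip: "coeff (sign_flip f) m = (-1) ^ size m * coeff f m"
  by transfer simp

lemma sign_flip_add [simp]: "sign_flip (f + g) = sign_flip f + sign_flip g"
  by (rule symfun_eqI) (simp add: coeff_sign_flip algebra_simps)

lemma sign_flip_minus [simp]: "sign_flip (- f) = - sign_flip f"
  by (rule symfun_eqI) (simp add: coeff_sign_flip)

lemma sign_flip_symfun_const [simp]: "sign_flip (symfun_const c) = symfun_const c"
  by (rule symfun_eqI) (simp add: coeff_sign_flip coeff_symfun_const)

lemma sign_flip_1 [simp]: "sign_flip 1 = 1"
  using sign_flip_symfun_const[of 1] by simp

lemma sign_flip_mult: "sign_flip (f * g) = sign_flip f * sign_flip g"
  by (rule symfun_eqI)
     (unfold coeff_sign_flip coeff_mult sum_distrib_left, intro sum.cong refl, auto simp: power_add)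

lemma sign_flip_adams:
  assumes k: "k > 0"
  shows "sign_flip (adams k f) = adams k (sign_flip f)"
proof (rule symfun_eqI)
  fix m
  show "coeff (sign_flip (adams k f)) m = coeff (adams k (sign_flip f)) m"
    using k
    by (cases "m \<in> range (scale_parts k)") (auto simp: coeff_sign_flip coeff_adams_not_in_range)
qed

lemma sign_flip_power_sum_1 [simp]: "sign_flip (power_sum (Suc 0)) = - power_sum (Suc 0)"
  by (rule symfun_eqI) (simp add: coeff_sign_flip coeff_power_sum)

section \<open>Order and locally finite sums\<close>

definition order_ge :: "symfun \<Rightarrow> nat \<Rightarrow> bool" where
  "order_ge f n \<longleftrightarrow> (\<forall>m. sf_wt m < n \<longrightarrow> coeff f m = 0)"

lemma order_geD: "order_ge f n \<Longrightarrow> sf_wt m < n \<Longrightarrow> coeff f m = 0"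
  by (simp add: order_ge_def)

lemma order_ge_0 [simp]: "order_ge f 0"
  by (simp add: order_ge_def)

lemma order_ge_zero [simp]: "order_ge 0 n"
  by (simp add: order_ge_def)

lemma order_ge_mono: "order_ge f n \<Longrightarrow> k \<le> n \<Longrightarrow> order_ge f k"
  by (simp add: order_ge_def)

lemma order_ge_1_iff: "order_ge f 1 \<longleftrightarrow> coeff f {#} = 0"
  by (auto simp: order_ge_def)

lemma order_ge_minus: "order_ge f n \<Longrightarrow> order_ge (- f) n"
  by (simp add: order_ge_def)

lemma order_ge_diff: "order_ge f n \<Longrightarrow> order_ge g n \<Longrightarrow> order_ge (f - g) n"
  by (simp add: order_ge_def)

lemma order_ge_euler: "order_ge f n \<Longrightarrow> order_ge (euler f) n"
  by (simp add: order_ge_def coeff_euler)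

lemma order_ge_sign_flip: "order_ge f n \<Longrightarrow> order_ge (sign_flip f) n"
  by (simp add: order_ge_def coeff_sign_flip)

lemma order_ge_symfun_const_mult: "order_ge f n \<Longrightarrow> order_ge (symfun_const c * f) n"
  by (simp add: order_ge_def coeff_symfun_const_mult)

lemma order_ge_of_nat_mult: "order_ge f n \<Longrightarrow> order_ge (of_nat c * f) n"
  using order_ge_symfun_const_mult[of f n "of_nat c"] by (simp add: symfun_const_of_nat)

lemma order_ge_mult:
  assumes "order_ge f a" "order_ge g b"
  shows "order_ge (f * g) (a + b)"
  unfolding order_ge_def
proof (intro allI impI)
  fix m
  assume m: "sf_wt m < a + b"
  have "coeff f (fst p) * coeff g (snd p) = 0" if "p \<in> splittings m" for p
  proof -
    have "sf_wt (fst p) < a \<or> sf_wt (snd p) < b"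
      using that m by auto
    then show ?thesis
      using assms by (auto simp: order_ge_def)
  qed
  then show "coeff (f * g) m = 0"
    unfolding coeff_mult by (rule sum.neutral[OF ballI])
qed

lemma order_ge_mult_left: "order_ge f a \<Longrightarrow> order_ge (f * g) a"
  using order_ge_mult[of f a g 0] by simp

lemma order_ge_power: "order_ge f a \<Longrightarrow> order_ge (f ^ n) (n * a)"
  by (induct n) (auto dest: order_ge_mult[of f a])

lemma order_ge_adams:
  assumes k: "k > 0" and f: "order_ge f n"
  shows "order_ge (adams k f) (k * n)"
  unfolding order_ge_def
proof (intro allI impI)
  fix m
  assume m: "sf_wt m < k * n"
  show "coeff (adams k f) m = 0"
  proof (cases "m \<in> range (scale_parts k)")
    case True
    then obtain a where a: "m = scale_parts k a"
      by auto
    then have "sf_wt a < n"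
      using m k by (simp add: sf_wt_scale_parts)
    then show ?thesis
      using a k f by (simp add: order_ge_def)
  qed (simp add: coeff_adams_not_in_range)
qed

lemma order_ge_adams_Suc: "order_ge f 1 \<Longrightarrow> order_ge (adams (Suc k) f) (Suc k)"
  using order_ge_adams[of "Suc k" f 1] by simp

lemma order_ge_power_sum: "k > 0 \<Longrightarrow> order_ge (power_sum k) k"
  by (auto simp: order_ge_def coeff_power_sum)

definition locally_finite :: "('i \<Rightarrow> symfun) \<Rightarrow> bool" where
  "locally_finite F \<longleftrightarrow> (\<forall>n. finite {i. \<exists>m. sf_wt m \<le> n \<and> coeff (F i) m \<noteq> 0})"

lift_definition lfsum :: "('i \<Rightarrow> symfun) \<Rightarrow> symfun" is "\<lambda>F m. Sum_any (\<lambda>i. F i m)" .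

lemma coeff_lfsum: "coeff (lfsum F) m = Sum_any (\<lambda>i. coeff (F i) m)"
  by transfer simp

lemma locally_finite_finite_support: "locally_finite F \<Longrightarrow> finite {i. coeff (F i) m \<noteq> 0}"
  unfolding locally_finite_def by (erule allE[of _ "sf_wt m"]) (erule finite_subset[rotated], auto)

lemma locally_finite_if_order_ge:
  assumes "\<And>i. order_ge (F i) (w i)" and "\<And>n. finite {i. w i \<le> n}"
  shows "locally_finite F"
  unfolding locally_finite_def
proof
  fix n
  have "{i. \<exists>m. sf_wt m \<le> n \<and> coeff (F i) m \<noteq> 0} \<subseteq> {i. w i \<le> n}"
    using assms(1) by (auto simp: order_ge_def) (meson le_trans not_le_imp_less)
  then show "finite {i. \<exists>m. sf_wt m \<le> n \<and> coeff (F i) m \<noteq> 0}"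
    using assms(2) by (rule finite_subset)
qed

lemma locally_finite_if_finite_index:
  assumes "finite A" and "\<And>i. i \<notin> A \<Longrightarrow> F i = 0"
  shows "locally_finite F"
  unfolding locally_finite_def
proof
  fix n
  have "{i. \<exists>m. sf_wt m \<le> n \<and> coeff (F i) m \<noteq> 0} \<subseteq> A"
    using assms(2) by fastforce
  then show "finite {i. \<exists>m. sf_wt m \<le> n \<and> coeff (F i) m \<noteq> 0}"
    using assms(1) by (rule finite_subset)
qed

lemma locally_finite_mono:
  assumes "locally_finite F"
    and "\<And>i m. coeff (G i) m \<noteq> 0 \<Longrightarrow> \<exists>m'. sf_wt m' \<le> sf_wt m \<and> coeff (F i) m' \<noteq> 0"
  shows "locally_finite G"
  unfolding locally_finite_def
proof
  fix n
  show "finite {i. \<exists>m. sf_wt m \<le> n \<and> coeff (G i) m \<noteq> 0}"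
    using assms(1)[unfolded locally_finite_def, rule_format, of n]
    by (rule finite_subset[rotated]) (auto dest!: assms(2) intro: le_trans)
qed

lemma locally_finite_mult_right:
  assumes "locally_finite F"
  shows "locally_finite (\<lambda>i. F i * g)"
proof (rule locally_finite_mono[OF assms])
  fix i m
  assume "coeff (F i * g) m \<noteq> 0"
  then obtain p where "p \<in> splittings m" "coeff (F i) (fst p) \<noteq> 0"
    unfolding coeff_mult by (metis (no_types, lifting) mult_zero_left sum.neutral)
  then show "\<exists>m'. sf_wt m' \<le> sf_wt m \<and> coeff (F i) m' \<noteq> 0"
    using sf_wt_le_if_in_splittings by blast
qed

lemma locally_finite_mult_left: "locally_finite F \<Longrightarrow> locally_finite (\<lambda>i. g * F i)"
  using locally_finite_mult_right[of F g] by (simp add: mult.commute)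

lemma Sum_any_sum_swap:
  assumes "finite A" and "\<And>a. a \<in> A \<Longrightarrow> finite {i. h i a \<noteq> (0 :: 'b :: comm_monoid_add)}"
  shows "(\<Sum>a\<in>A. Sum_any (\<lambda>i. h i a)) = Sum_any (\<lambda>i. \<Sum>a\<in>A. h i a)"
proof -
  define U where "U = (\<Union>a\<in>A. {i. h i a \<noteq> 0})"
  have U: "finite U"
    using assms by (simp add: U_def)
  have "Sum_any (\<lambda>i. \<Sum>a\<in>A. h i a) = (\<Sum>i\<in>U. \<Sum>a\<in>A. h i a)"
    by (rule Sum_any.expand_superset[OF U])
       (auto simp: U_def elim: sum.not_neutral_contains_not_neutral)
  also have "\<dots> = (\<Sum>a\<in>A. \<Sum>i\<in>U. h i a)"
    by (rule sum.swap)
  also have "\<dots> = (\<Sum>a\<in>A. Sum_any (\<lambda>i. h i a))"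
    by (intro sum.cong refl, rule Sum_any.expand_superset[OF U, symmetric]) (auto simp: U_def)
  finally show ?thesis ..
qed

lemma lfsum_cong: "(\<And>i. F i = G i) \<Longrightarrow> lfsum F = lfsum G"
  by metis

lemma lfsum_zero: "lfsum (\<lambda>i. 0) = 0"
  by (rule symfun_eqI) (simp add: coeff_lfsum)

lemma lfsum_finite:
  assumes "finite A" and "\<And>i. i \<notin> A \<Longrightarrow> F i = 0"
  shows "lfsum F = sum F A"
proof (rule symfun_eqI)
  fix m
  have "coeff (lfsum F) m = (\<Sum>i\<in>A. coeff (F i) m)"
    unfolding coeff_lfsum by (rule Sum_any.expand_superset[OF assms(1)]) (use assms(2) in force)
  also have "\<dots> = coeff (sum F A) m"
    using assms(1) by (induct A rule: finite_induct) auto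
  finally show "coeff (lfsum F) m = coeff (sum F A) m" .
qed

lemma lfsum_single: "lfsum (\<lambda>i. if i = a then f else 0) = f"
  by (subst lfsum_finite[of "{a}"]) auto

lemma lfsum_add:
  assumes "locally_finite F" "locally_finite G"
  shows "lfsum (\<lambda>i. F i + G i) = lfsum F + lfsum G"
  by (rule symfun_eqI)
     (simp add: coeff_lfsum Sum_any.distrib locally_finite_finite_support[OF assms(1)]
       locally_finite_finite_support[OF assms(2)])

lemma lfsum_minus: "lfsum (\<lambda>i. - F i) = - lfsum F"
proof (rule symfun_eqI)
  fix m
  have "Sum_any (\<lambda>i. - coeff (F i) m) = - Sum_any (\<lambda>i. coeff (F i) m)"
    using Sum_any_right_distrib[of "\<lambda>i. coeff (F i) m" "-1 :: rat"]
    by (cases "finite {i. coeff (F i) m \<noteq> 0}") auto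
  then show "coeff (lfsum (\<lambda>i. - F i)) m = coeff (- lfsum F) m"
    by (simp add: coeff_lfsum)
qed

lemma lfsum_mult_right:
  assumes "locally_finite F"
  shows "lfsum F * g = lfsum (\<lambda>i. F i * g)"
proof (rule symfun_eqI)
  fix m
  have "coeff (lfsum F * g) m =
      (\<Sum>p\<in>splittings m. Sum_any (\<lambda>i. coeff (F i) (fst p) * coeff g (snd p)))"
    unfolding coeff_mult coeff_lfsum
    by (simp add: Sum_any_left_distrib locally_finite_finite_support[OF assms])
  also have "\<dots> = Sum_any (\<lambda>i. \<Sum>p\<in>splittings m. coeff (F i) (fst p) * coeff g (snd p))"
    by (rule Sum_any_sum_swap)
       (auto intro: finite_subset[OF _ locally_finite_finite_support[OF assms]])
  finally show "coeff (lfsum F * g) m = coeff (lfsum (\<lambda>i. F i * g)) m"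
    by (simp add: coeff_lfsum coeff_mult)
qed

lemma lfsum_mult_left: "locally_finite F \<Longrightarrow> g * lfsum F = lfsum (\<lambda>i. g * F i)"
  using lfsum_mult_right[of F g] by (simp add: mult.commute)

lemma lfsum_symfun_const_mult: "symfun_const c * lfsum F = lfsum (\<lambda>i. symfun_const c * F i)"
proof (rule symfun_eqI)
  fix m
  show "coeff (symfun_const c * lfsum F) m = coeff (lfsum (\<lambda>i. symfun_const c * F i)) m"
  proof (cases "c = 0")
    case False
    then have "{i. c * coeff (F i) m \<noteq> 0} = {i. coeff (F i) m \<noteq> 0}"
      by simp
    then show ?thesis
      using Sum_any_right_distrib[of "\<lambda>i. coeff (F i) m" c]
      by (cases "finite {i. coeff (F i) m \<noteq> 0}")
         (simp_all add: coeff_symfun_const_mult coeff_lfsum Sum_any.infinite)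
  qed (simp add: coeff_symfun_const_mult coeff_lfsum)
qed

lemma lfsum_euler: "euler (lfsum F) = lfsum (\<lambda>i. euler (F i))"
proof (rule symfun_eqI)
  fix m
  show "coeff (euler (lfsum F)) m = coeff (lfsum (\<lambda>i. euler (F i))) m"
    using Sum_any_right_distrib[of "\<lambda>i. coeff (F i) m" "of_nat (sf_wt m)"]
    by (cases "finite {i. coeff (F i) m \<noteq> 0}"; cases "sf_wt m = 0")
       (auto simp: coeff_euler coeff_lfsum)
qed

lemma lfsum_sign_flip: "sign_flip (lfsum F) = lfsum (\<lambda>i. sign_flip (F i))"
proof (rule symfun_eqI)
  fix m
  show "coeff (sign_flip (lfsum F)) m = coeff (lfsum (\<lambda>i. sign_flip (F i))) m"
    using Sum_any_right_distrib[of "\<lambda>i. coeff (F i) m" "(-1) ^ size m"]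
    by (cases "finite {i. coeff (F i) m \<noteq> 0}") (auto simp: coeff_sign_flip coeff_lfsum)
qed

lemma lfsum_adams:
  assumes "k > 0"
  shows "adams k (lfsum F) = lfsum (\<lambda>i. adams k (F i))"
proof (rule symfun_eqI)
  fix m
  show "coeff (adams k (lfsum F)) m = coeff (lfsum (\<lambda>i. adams k (F i))) m"
  proof (cases "m \<in> range (scale_parts k)")
    case True
    then obtain a where "m = scale_parts k a"
      by auto
    then show ?thesis
      using assms by (simp add: coeff_lfsum)
  qed (simp add: coeff_adams_not_in_range coeff_lfsum)
qed

lemma lfsum_reindex_inj:
  assumes "inj h" and "\<And>j. j \<notin> range h \<Longrightarrow> F j = 0"
  shows "lfsum F = lfsum (\<lambda>i. F (h i))"
proof (rule symfun_eqI)
  fix m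
  define S where "S = {i. coeff (F (h i)) m \<noteq> 0}"
  have support: "{j. coeff (F j) m \<noteq> 0} = h ` S"
  proof
    show "{j. coeff (F j) m \<noteq> 0} \<subseteq> h ` S"
    proof
      fix j
      assume j: "j \<in> {j. coeff (F j) m \<noteq> 0}"
      then have "j \<in> range h"
        using assms(2) by fastforce
      then show "j \<in> h ` S"
        using j by (auto simp: S_def)
    qed
  qed (auto simp: S_def)
  show "coeff (lfsum F) m = coeff (lfsum (\<lambda>i. F (h i))) m"
  proof (cases "finite S")
    case True
    have "Sum_any (\<lambda>j. coeff (F j) m) = (\<Sum>j\<in>h ` S. coeff (F j) m)"
      by (rule Sum_any.expand_superset) (use True support in auto)
    also have "\<dots> = (\<Sum>i\<in>S. coeff (F (h i)) m)"
      by (rule sum.reindex[OF inj_on_subset[OF assms(1)], unfolded o_def]) simp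
    also have "\<dots> = Sum_any (\<lambda>i. coeff (F (h i)) m)"
      by (rule Sum_any.expand_superset[symmetric]) (use True in \<open>auto simp: S_def\<close>)
    finally show ?thesis
      by (simp add: coeff_lfsum)
  next
    case False
    then have "infinite (h ` S)"
      using finite_imageD[OF _ inj_on_subset[OF assms(1)]] by blast
    then show ?thesis
      using False by (simp add: coeff_lfsum support S_def)
  qed
qed

lemma lfsum_pair:
  assumes "locally_finite (\<lambda>(i, j). G i j)"
  shows "lfsum (\<lambda>i. lfsum (\<lambda>j. G i j)) = lfsum (\<lambda>(i, j). G i j)"
proof (rule symfun_eqI)
  fix m
  have fin: "finite {p. coeff ((\<lambda>(i, j). G i j) p) m \<noteq> 0}"
    by (rule locally_finite_finite_support[OF assms])
  have fin1: "finite {i. \<exists>j. coeff (G i j) m \<noteq> 0}"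
    using finite_imageI[OF fin, of fst] by (rule finite_subset[rotated]) (force simp: image_iff)
  have fin2: "finite {j. \<exists>i. coeff (G i j) m \<noteq> 0}"
    using finite_imageI[OF fin, of snd] by (rule finite_subset[rotated]) (force simp: image_iff)
  have "Sum_any (\<lambda>i. Sum_any (\<lambda>j. coeff (G i j) m)) = Sum_any (\<lambda>(i, j). coeff (G i j) m)"
    by (rule Sum_any.cartesian_product[OF finite_cartesian_product[OF fin1 fin2]]) simp
  then show "coeff (lfsum (\<lambda>i. lfsum (\<lambda>j. G i j))) m = coeff (lfsum (\<lambda>(i, j). G i j)) m"
    by (simp add: coeff_lfsum split_def)
qed

lemma lfsum_shift:
  assumes "locally_finite F"
  shows "lfsum F = F 0 + lfsum (\<lambda>n. F (Suc n))"
proof -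
  have first: "locally_finite (\<lambda>n :: nat. if n = 0 then F 0 else 0)"
    by (rule locally_finite_if_finite_index[of "{0}"]) auto
  have rest: "locally_finite (\<lambda>n. if n = 0 then 0 else F n)"
    by (rule locally_finite_mono[OF assms]) (auto split: if_splits)
  have "lfsum F = lfsum (\<lambda>n. (if n = 0 then F 0 else 0) + (if n = 0 then 0 else F n))"
    by (rule lfsum_cong) simp
  also have "\<dots> = F 0 + lfsum (\<lambda>n. if n = 0 then 0 else F n)"
    by (subst lfsum_add[OF first rest]) (simp add: lfsum_single)
  also have "lfsum (\<lambda>n. if n = 0 then 0 else F n) = lfsum (\<lambda>n. F (Suc n))"
  proof -
    have "(if j = 0 then 0 else F j) = 0" if "j \<notin> range Suc" for j
      using that by (cases j) auto
    from lfsum_reindex_inj[of Suc, OF _ this] show ?thesis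
      by simp
  qed
  finally show ?thesis .
qed

section \<open>Plethysm\<close>

definition pleth_monom :: "nat multiset \<Rightarrow> symfun \<Rightarrow> symfun" where
  "pleth_monom lam W = prod_mset (image_mset (\<lambda>i. adams (Suc i) W) lam)"

lemma pleth_monom_empty [simp]: "pleth_monom {#} W = 1"
  by (simp add: pleth_monom_def)

lemma pleth_monom_add_mset [simp]:
  "pleth_monom (add_mset i lam) W = adams (Suc i) W * pleth_monom lam W"
  by (simp add: pleth_monom_def)

lemma pleth_monom_replicate: "pleth_monom (replicate_mset n k) W = adams (Suc k) W ^ n"
  by (induct n) simp_all

lemma coeff_prod_list:
  "coeff (prod_list (map G xs)) = foldr sf_mult (map (\<lambda>x. coeff (G x)) xs) (sf_const 1)"
  by (induct xs) (simp_all add: one_symfun.rep_eq times_symfun.rep_eq coeff.rep_eq)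

lemma sf_pleth_mono_eq_coeff: "sf_pleth_mono lam (coeff W) = coeff (pleth_monom lam W)"
proof -
  have "coeff (pleth_monom lam W) =
      coeff (prod_list (map (\<lambda>i. adams (Suc i) W) (sorted_list_of_multiset lam)))"
    unfolding pleth_monom_def by (metis mset_map mset_sorted_list_of_multiset prod_mset_prod_list)
  also have "\<dots> = sf_pleth_mono lam (coeff W)"
    unfolding coeff_prod_list sf_pleth_mono_def by (simp add: adams.rep_eq coeff.rep_eq)
  finally show ?thesis ..
qed

lift_definition pleth :: "sf \<Rightarrow> symfun \<Rightarrow> symfun" is sf_pleth .

lemma coeff_pleth:
  "coeff (pleth g W) m = (\<Sum>lam\<in>{lam. sf_wt lam \<le> sf_wt m}. g lam * coeff (pleth_monom lam W) m)"
  by (simp add: pleth.rep_eq sf_pleth_def sf_pleth_mono_eq_coeff[of _ W, unfolded coeff.rep_eq]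
      coeff.rep_eq)

lemma coeff_pleth_empty: "coeff (pleth g W) {#} = g {#}"
proof -
  have "{lam. sf_wt lam \<le> 0} = {{#}}"
    by auto
  then show ?thesis
    by (simp add: coeff_pleth coeff_1)
qed

lemma pleth_add: "pleth (sf_add g h) W = pleth g W + pleth h W"
  by (rule symfun_eqI) (simp add: coeff_pleth sf_add_def algebra_simps sum.distrib)

lemma pleth_sub: "pleth (sf_sub g h) W = pleth g W - pleth h W"
  by (rule symfun_eqI) (simp add: coeff_pleth sf_sub_def algebra_simps sum_subtractf)

lemma order_ge_pleth_monom: "order_ge W 1 \<Longrightarrow> order_ge (pleth_monom lam W) (sf_wt lam)"
proof (induct lam)
  case (add x lam)
  then show ?case
    using order_ge_mult[OF order_ge_adams_Suc[of W x] add.hyps] by simp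
qed simp

lemma locally_finite_pleth_terms:
  "order_ge W 1 \<Longrightarrow> locally_finite (\<lambda>lam. symfun_const (g lam) * pleth_monom lam W)"
  by (rule locally_finite_if_order_ge[of _ sf_wt])
     (rule order_ge_symfun_const_mult[OF order_ge_pleth_monom], simp_all add: finite_sf_wt_le)

lemma pleth_eq_lfsum:
  assumes W: "order_ge W 1"
  shows "pleth g W = lfsum (\<lambda>lam. symfun_const (g lam) * pleth_monom lam W)"
proof (rule symfun_eqI)
  fix m
  have "coeff (lfsum (\<lambda>lam. symfun_const (g lam) * pleth_monom lam W)) m =
      (\<Sum>lam\<in>{lam. sf_wt lam \<le> sf_wt m}. g lam * coeff (pleth_monom lam W) m)"
    unfolding coeff_lfsum coeff_symfun_const_mult
    by (rule Sum_any.expand_superset[OF finite_sf_wt_le])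
       (use order_geD[OF order_ge_pleth_monom[OF W]] in \<open>auto simp: not_le[symmetric]\<close>)
  then show "coeff (pleth g W) m = coeff (lfsum (\<lambda>lam. symfun_const (g lam) * pleth_monom lam W)) m"
    by (simp add: coeff_pleth)
qed

lemma pleth_sf_const_1:
  assumes "order_ge W 1"
  shows "pleth (sf_const 1) W = 1"
proof -
  have "pleth (sf_const 1) W = lfsum (\<lambda>lam :: nat multiset. if lam = {#} then 1 else 0)"
    unfolding pleth_eq_lfsum[OF assms] by (rule lfsum_cong) (simp add: sf_const_def)
  then show ?thesis
    by (simp add: lfsum_single)
qed

lemma pleth_power_sum_1:
  assumes "order_ge W 1"
  shows "pleth (sf_p 1) W = W"
proof -
  have "pleth (sf_p 1) W = lfsum (\<lambda>lam. if lam = {#0 :: nat#} then W else 0)"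
    unfolding pleth_eq_lfsum[OF assms] by (rule lfsum_cong) (simp add: sf_p_def)
  then show ?thesis
    by (simp add: lfsum_single)
qed

lemma sign_flip_pleth_monom: "sign_flip (pleth_monom lam W) = pleth_monom lam (sign_flip W)"
  by (induct lam) (simp_all add: sign_flip_mult sign_flip_adams)

lemma sign_flip_pleth: "order_ge W 1 \<Longrightarrow> sign_flip (pleth g W) = pleth g (sign_flip W)"
  by (simp add: pleth_eq_lfsum order_ge_sign_flip lfsum_sign_flip sign_flip_mult sign_flip_pleth_monom)

lemma coeff_Abs_symfun: "coeff (Abs_symfun f) = f"
  by (simp add: coeff.rep_eq Abs_symfun_inverse)

lemma Abs_symfun_sf_mult: "Abs_symfun (sf_mult f g) = Abs_symfun f * Abs_symfun g"
  by (rule symfun_eqI) (simp add: coeff_Abs_symfun coeff_mult sf_mult_eq_sum_splittings)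

lemma Abs_symfun_sf_add: "Abs_symfun (sf_add f g) = Abs_symfun f + Abs_symfun g"
  by (rule symfun_eqI) (simp add: coeff_Abs_symfun sf_add_def)

lemma Abs_symfun_sf_sub: "Abs_symfun (sf_sub f g) = Abs_symfun f - Abs_symfun g"
  by (rule symfun_eqI) (simp add: coeff_Abs_symfun sf_sub_def)

lemma Abs_symfun_sf_const_1: "Abs_symfun (sf_const 1) = 1"
  by (rule symfun_eqI) (simp add: coeff_Abs_symfun sf_const_def coeff_1)

lemma Abs_symfun_sf_p: "Abs_symfun (sf_p k) = power_sum k"
  by (rule symfun_eqI) (simp add: coeff_Abs_symfun coeff_power_sum sf_p_def)

lemma Abs_symfun_sf_pleth: "Abs_symfun (sf_pleth g f) = pleth g (Abs_symfun f)"
  by (rule symfun_eqI) (simp add: coeff_Abs_symfun pleth.rep_eq coeff.rep_eq Abs_symfun_inverse)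

lemma Abs_symfun_sf_neg_sf_susp: "Abs_symfun (sf_neg (sf_susp f)) = sign_flip (Abs_symfun f)"
  by (rule symfun_eqI) (simp add: coeff_Abs_symfun coeff_sign_flip sf_neg_def sf_susp_def)

section \<open>The plethystic exponential\<close>

definition adams_sum :: "symfun \<Rightarrow> symfun" where
  "adams_sum F = lfsum (\<lambda>j. adams (Suc j) F)"

lemma locally_finite_adams:
  assumes "order_ge F 1"
  shows "locally_finite (\<lambda>j. adams (Suc j) F)"
proof (rule locally_finite_if_order_ge[of _ Suc])
  show "finite {i. Suc i \<le> n}" for n
    by (rule finite_subset[of _ "{..<n}"]) auto
qed (rule order_ge_adams_Suc[OF assms])

lemma adams_sum_minus: "adams_sum (- F) = - adams_sum F"
  by (simp add: adams_sum_def adams_minus lfsum_minus)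

text \<open>By the Leibniz rule and \<open>euler (p\<^sub>k \<circ> W) = k (p\<^sub>k \<circ> euler W)\<close>, the Euler operator turns
  \<open>p\<^sub>\<lambda> \<circ> W\<close> into the sum of these terms over the parts \<open>j\<close> of \<open>\<lambda>\<close>.\<close>

definition euler_monom_term :: "symfun \<Rightarrow> nat multiset \<Rightarrow> nat \<Rightarrow> symfun" where
  "euler_monom_term W lam j =
     of_nat (count lam j * Suc j) * (adams (Suc j) (euler W) * pleth_monom (lam - {#j#}) W)"

lemma euler_monom_term_eq_0: "j \<notin># lam \<Longrightarrow> euler_monom_term W lam j = 0"
  by (simp add: euler_monom_term_def not_in_iff)

lemma euler_monom_term_add_mset:
  "euler_monom_term W (add_mset x lam) j = adams (Suc x) W * euler_monom_term W lam j +
     (if j = x then of_nat (Suc x) * (adams (Suc x) (euler W) * pleth_monom lam W) else 0)"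
proof (cases "j \<in># lam")
  case True
  then have remove: "add_mset x lam - {#j#} = add_mset x (lam - {#j#})"
    using diff_union_single_conv[OF True, of "{#x#}"] by simp
  from True have insert: "pleth_monom lam W = adams (Suc j) W * pleth_monom (lam - {#j#}) W"
    by (metis insert_DiffM pleth_monom_add_mset)
  show ?thesis
    unfolding euler_monom_term_def remove
    by (cases "j = x") (simp_all add: insert algebra_simps)
next
  case False
  then show ?thesis
    by (cases "j = x") (simp_all add: euler_monom_term_def not_in_iff)
qed

lemma euler_pleth_monom: "euler (pleth_monom lam W) = lfsum (euler_monom_term W lam)"
proof (induct lam)
  case empty
  show ?case
    by (simp add: euler_monom_term_def lfsum_zero)
next
  case (add x lam)
  have terms: "locally_finite (euler_monom_term W lam)"
    by (rule locally_finite_if_finite_index[of "set_mset lam"]) (auto simp: euler_monom_term_eq_0)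
  have new_term:
    "locally_finite (\<lambda>j. if j = x then of_nat (Suc x) * (adams (Suc x) (euler W) * pleth_monom lam W) else 0)"
    by (rule locally_finite_if_finite_index[of "{x}"]) auto
  have "euler (pleth_monom (add_mset x lam) W) =
      euler (adams (Suc x) W) * pleth_monom lam W + adams (Suc x) W * lfsum (euler_monom_term W lam)"
    by (simp add: euler_mult add)
  also have "\<dots> = lfsum (\<lambda>j. adams (Suc x) W * euler_monom_term W lam j +
      (if j = x then of_nat (Suc x) * (adams (Suc x) (euler W) * pleth_monom lam W) else 0))"
    by (subst lfsum_add[OF locally_finite_mult_left[OF terms] new_term])
       (simp add: lfsum_single lfsum_mult_left[OF terms] euler_adams algebra_simps)
  also have "\<dots> = lfsum (euler_monom_term W (add_mset x lam))"
    by (rule lfsum_cong) (simp add: euler_monom_term_add_mset)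
  finally show ?case .
qed

lemma order_ge_euler_monom_term:
  assumes W: "order_ge W 1"
  shows "order_ge (euler_monom_term W lam j) (max (sf_wt lam) (Suc j))"
proof (cases "j \<in># lam")
  case True
  have weight: "sf_wt lam = Suc j + sf_wt (lam - {#j#})"
    using sf_wt_add_mset[of j "lam - {#j#}"] insert_DiffM[OF True] by simp
  have "order_ge (adams (Suc j) (euler W) * pleth_monom (lam - {#j#}) W) (sf_wt lam)"
    unfolding weight
    by (rule order_ge_mult[OF order_ge_adams_Suc[OF order_ge_euler[OF W]] order_ge_pleth_monom[OF W]])
  then have "order_ge (euler_monom_term W lam j) (sf_wt lam)"
    unfolding euler_monom_term_def by (rule order_ge_of_nat_mult)
  moreover have "Suc j \<le> sf_wt lam"
    using less_sf_wt_if_in[OF True] by simp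
  ultimately show ?thesis
    by (simp add: max_def)
qed (simp add: euler_monom_term_eq_0)

definition Exp :: sf where
  "Exp = sf_add Comm (sf_const 1)"

lemma Exp_eq: "Exp lam = 1 / of_nat (sf_z lam)"
  by (simp add: Exp_def sf_add_def Comm_def sf_const_def sf_z_def)

lemma sf_z_add_mset: "sf_z (add_mset j mu) = sf_z mu * Suc j * Suc (count mu j)"
proof (cases "j \<in># mu")
  case True
  have "sf_z (add_mset j mu) = (Suc j ^ Suc (count mu j) * fact (Suc (count mu j))) *
      (\<Prod>i\<in>set_mset mu - {j}. Suc i ^ count mu i * fact (count mu i))"
    unfolding sf_z_def using True by (simp add: prod.remove insert_absorb)
  moreover have "sf_z mu = (Suc j ^ count mu j * fact (count mu j)) *
      (\<Prod>i\<in>set_mset mu - {j}. Suc i ^ count mu i * fact (count mu i))"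
    unfolding sf_z_def using True by (simp add: prod.remove)
  ultimately show ?thesis
    by (simp add: algebra_simps)
next
  case False
  then have "(\<Prod>i\<in>set_mset mu. Suc i ^ count (add_mset j mu) i * fact (count (add_mset j mu) i)) = sf_z mu"
    unfolding sf_z_def by (intro prod.cong) auto
  then show ?thesis
    using False by (simp add: sf_z_def not_in_iff)
qed

text \<open>The step \<open>z\<^bsub>\<mu> + {#j#}\<^esub> = z\<^sub>\<mu> (j + 1) (count \<mu> j + 1)\<close> cancels the factor produced by the
  Euler operator.\<close>

lemma Exp_euler_monom_term:
  "symfun_const (Exp (add_mset j mu)) * euler_monom_term W (add_mset j mu) j =
     symfun_const (Exp mu) * pleth_monom mu W * adams (Suc j) (euler W)"
proof -
  have "(of_nat (sf_z mu) :: rat) \<noteq> 0"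
    by (simp add: sf_z_def)
  then have "Exp (add_mset j mu) * of_nat (Suc (count mu j) * Suc j) = Exp mu"
    unfolding Exp_eq sf_z_add_mset of_nat_mult by (simp add: field_simps del: of_nat_Suc)
  then show ?thesis
    unfolding euler_monom_term_def
    by (simp flip: symfun_const_of_nat symfun_const_mult add: ac_simps)
qed

lemma lfsum_reindex_add_mset:
  assumes "\<And>lam j. j \<notin># lam \<Longrightarrow> G lam j = 0"
  shows "lfsum (\<lambda>(lam, j). G lam j) = lfsum (\<lambda>(mu, j). G (add_mset j mu) j)"
proof -
  let ?h = "\<lambda>(mu, j). (add_mset j mu, j)"
  have "inj ?h"
    by (auto simp: inj_def)
  moreover have "(\<lambda>(lam, j). G lam j) q = 0" if "q \<notin> range ?h" for q
  proof -
    obtain lam j where q: "q = (lam, j)"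
      by (cases q)
    have "j \<notin># lam"
    proof
      assume "j \<in># lam"
      then have "q = ?h (lam - {#j#}, j)"
        using q by simp
      then show False
        using that by blast
    qed
    then show ?thesis
      by (simp add: q assms)
  qed
  ultimately have "lfsum (\<lambda>(lam, j). G lam j) = lfsum (\<lambda>p. (\<lambda>(lam, j). G lam j) (?h p))"
    by (rule lfsum_reindex_inj)
  also have "\<dots> = lfsum (\<lambda>(mu, j). G (add_mset j mu) j)"
    by (rule lfsum_cong) (simp add: split_def)
  finally show ?thesis .
qed

lemma finite_sf_wt_Suc_le: "finite {p :: nat multiset \<times> nat. max (sf_wt (fst p)) (Suc (snd p)) \<le> n}"
  by (rule finite_subset[OF _ finite_cartesian_product[OF finite_sf_wt_le[of n] finite_lessThan[of n]]])
     auto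

lemma locally_finite_Exp_euler_terms:
  assumes W: "order_ge W 1"
  shows "locally_finite (\<lambda>(lam, j). symfun_const (Exp lam) * euler_monom_term W lam j)"
proof (rule locally_finite_if_order_ge[of _ "\<lambda>p. max (sf_wt (fst p)) (Suc (snd p))", OF _ finite_sf_wt_Suc_le])
  fix p :: "nat multiset \<times> nat"
  show "order_ge ((\<lambda>(lam, j). symfun_const (Exp lam) * euler_monom_term W lam j) p)
      (max (sf_wt (fst p)) (Suc (snd p)))"
    by (cases p) (simp add: order_ge_symfun_const_mult order_ge_euler_monom_term[OF W])
qed

lemma locally_finite_Exp_adams_terms:
  assumes W: "order_ge W 1"
  shows "locally_finite (\<lambda>(mu, j). symfun_const (Exp mu) * pleth_monom mu W * adams (Suc j) (euler W))"
proof (rule locally_finite_if_order_ge[of _ "\<lambda>p. max (sf_wt (fst p)) (Suc (snd p))", OF _ finite_sf_wt_Suc_le])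
  fix p :: "nat multiset \<times> nat"
  obtain mu j where p: "p = (mu, j)"
    by (cases p)
  have "order_ge (symfun_const (Exp mu) * pleth_monom mu W * adams (Suc j) (euler W)) (sf_wt mu + Suc j)"
    by (intro order_ge_mult order_ge_symfun_const_mult order_ge_pleth_monom order_ge_adams_Suc
        order_ge_euler W)
  then show "order_ge ((\<lambda>(mu, j). symfun_const (Exp mu) * pleth_monom mu W * adams (Suc j) (euler W)) p)
      (max (sf_wt (fst p)) (Suc (snd p)))"
    unfolding p by (auto elim: order_ge_mono)
qed

text \<open>Writing a partition containing \<open>j\<close> as \<open>\<mu> + {#j#}\<close> turns the double sum over \<open>(\<lambda>, j)\<close> into a
  product.\<close>

lemma euler_pleth_Exp:
  assumes W: "order_ge W 1"
  shows "euler (pleth Exp W) = pleth Exp W * adams_sum (euler W)"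
proof -
  let ?A = "\<lambda>(lam, j). symfun_const (Exp lam) * euler_monom_term W lam j"
  let ?B = "\<lambda>(mu, j). symfun_const (Exp mu) * pleth_monom mu W * adams (Suc j) (euler W)"
  have "euler (pleth Exp W) = lfsum (\<lambda>lam. lfsum (\<lambda>j. symfun_const (Exp lam) * euler_monom_term W lam j))"
    by (simp add: pleth_eq_lfsum[OF W] lfsum_euler euler_symfun_const_mult euler_pleth_monom
        lfsum_symfun_const_mult)
  also have "\<dots> = lfsum ?A"
    using lfsum_pair locally_finite_Exp_euler_terms[OF W] by fastforce
  also have "\<dots> = lfsum (\<lambda>(mu, j). symfun_const (Exp (add_mset j mu)) * euler_monom_term W (add_mset j mu) j)"
    by (rule lfsum_reindex_add_mset) (simp add: euler_monom_term_eq_0)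
  also have "\<dots> = lfsum ?B"
    by (rule lfsum_cong) (auto simp: Exp_euler_monom_term)
  also have "\<dots> = lfsum (\<lambda>mu. lfsum (\<lambda>j. symfun_const (Exp mu) * pleth_monom mu W * adams (Suc j) (euler W)))"
    using lfsum_pair locally_finite_Exp_adams_terms[OF W] by fastforce
  also have "\<dots> = lfsum (\<lambda>mu. symfun_const (Exp mu) * pleth_monom mu W * adams_sum (euler W))"
    unfolding adams_sum_def
    by (simp add: lfsum_mult_left[OF locally_finite_adams[OF order_ge_euler[OF W]]])
  also have "\<dots> = pleth Exp W * adams_sum (euler W)"
    by (simp add: pleth_eq_lfsum[OF W] lfsum_mult_right[OF locally_finite_pleth_terms[OF W]])
  finally show ?thesis .
qed

lemma pleth_Exp: "order_ge W 1 \<Longrightarrow> pleth Exp W = 1 + pleth Comm W"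
  by (simp add: Exp_def pleth_add pleth_sf_const_1)

lemma coeff_pleth_Comm_empty: "coeff (pleth Comm W) {#} = 0"
  by (simp add: coeff_pleth_empty Comm_def)

lemma order_ge_pleth_Comm: "order_ge (pleth Comm W) 1"
  unfolding order_ge_1_iff by (rule coeff_pleth_Comm_empty)

lemma euler_pleth_Comm:
  "order_ge W 1 \<Longrightarrow> euler (pleth Comm W) = (1 + pleth Comm W) * adams_sum (euler W)"
  using euler_pleth_Exp[of W] by (simp add: pleth_Exp)

lemma pleth_Comm_inverse:
  assumes W: "order_ge W 1"
  shows "(1 + pleth Comm W) * (1 + pleth Comm (- W)) = 1"
proof (rule euler_eqI)
  show "euler ((1 + pleth Comm W) * (1 + pleth Comm (- W))) = euler 1"
    using W order_ge_minus[OF W]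
    by (simp add: euler_mult euler_pleth_Comm adams_sum_minus algebra_simps)
  show "coeff ((1 + pleth Comm W) * (1 + pleth Comm (- W))) {#} = coeff 1 {#}"
    by (simp add: coeff_mult_empty coeff_pleth_Comm_empty coeff_1)
qed

section \<open>Geometric and logarithmic series\<close>

definition geom :: "symfun \<Rightarrow> symfun" where
  "geom u = lfsum (\<lambda>n. (- u) ^ n)"

lemma locally_finite_powers:
  assumes "order_ge u 1"
  shows "locally_finite (\<lambda>n. u ^ n)"
  by (rule locally_finite_if_order_ge[of _ id]) (use order_ge_power[OF assms] in simp_all)

lemma one_plus_mult_geom:
  assumes u: "order_ge u 1"
  shows "(1 + u) * geom u = 1"
proof -
  have powers: "locally_finite (\<lambda>n. (- u) ^ n)"
    by (rule locally_finite_powers[OF order_ge_minus[OF u]])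
  have "geom u = 1 + lfsum (\<lambda>n. (- u) * (- u) ^ n)"
    unfolding geom_def by (subst lfsum_shift[OF powers]) simp
  also have "\<dots> = 1 + (- u) * geom u"
    by (simp only: geom_def lfsum_mult_left[OF powers])
  finally show ?thesis
    by (simp add: algebra_simps)
qed

lemma one_plus_mult_cancel:
  assumes "order_ge u 1" and "(1 + u) * a = (1 + u) * b"
  shows "a = b"
proof -
  have inverse: "(1 + u) * geom u = 1"
    by (rule one_plus_mult_geom[OF assms(1)])
  have "a = geom u * ((1 + u) * a)"
    by (simp add: mult.assoc[symmetric] mult.commute[of "geom u"] inverse)
  also have "\<dots> = b"
    by (simp add: assms(2) mult.assoc[symmetric] mult.commute[of "geom u"] inverse)
  finally show ?thesis .
qed

lemma pleth_p1_over_1_plus_p1: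
  assumes C: "order_ge C 1"
  shows "(1 + C) * pleth sf_p1_over_1_plus_p1 C = C"
proof -
  let ?h = "\<lambda>n. replicate_mset (Suc n) (0 :: nat)"
  have inj: "inj ?h"
    by (rule injI) (auto simp: replicate_mset_eq_iff)
  have outside: "symfun_const (sf_p1_over_1_plus_p1 lam) * pleth_monom lam C = 0"
    if "lam \<notin> range ?h" for lam
  proof -
    have "\<not> (lam \<noteq> {#} \<and> set_mset lam = {0})"
      using that eq_replicate_mset_if_set_mset_eq_singleton[of lam 0] by auto
    then have "sf_p1_over_1_plus_p1 lam = 0"
      unfolding sf_p1_over_1_plus_p1_def by (rule if_not_P)
    then show ?thesis
      by simp
  qed
  have on_range: "sf_p1_over_1_plus_p1 (?h n) = (-1) ^ n" for n
  proof -
    have "set_mset (?h n) = {0}"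
      by simp
    then show ?thesis
      unfolding sf_p1_over_1_plus_p1_def by (simp del: replicate_mset_Suc)
  qed
  have "pleth sf_p1_over_1_plus_p1 C =
      lfsum (\<lambda>n. symfun_const (sf_p1_over_1_plus_p1 (?h n)) * pleth_monom (?h n) C)"
    unfolding pleth_eq_lfsum[OF C] by (rule lfsum_reindex_inj[OF inj outside])
  also have "\<dots> = lfsum (\<lambda>n. C * (- C) ^ n)"
    unfolding on_range pleth_monom_replicate symfun_const_power symfun_const_minus power_minus[of C]
    by (simp add: ac_simps)
  also have "\<dots> = C * geom C"
    unfolding geom_def by (rule lfsum_mult_left[OF locally_finite_powers[OF order_ge_minus[OF C]], symmetric])
  finally show ?thesis
    using one_plus_mult_geom[OF C] by (simp add: ac_simps)
qed

definition ln1p :: "symfun \<Rightarrow> symfun" where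
  "ln1p u = lfsum (\<lambda>n. symfun_const ((-1) ^ n / of_nat (Suc n)) * u ^ Suc n)"

lemma euler_ln1p:
  assumes u: "order_ge u 1"
  shows "(1 + u) * euler (ln1p u) = euler u"
proof -
  have "euler (ln1p u) = lfsum (\<lambda>n. (- u) ^ n * euler u)"
  proof (unfold ln1p_def lfsum_euler, rule lfsum_cong)
    fix n
    have "(-1) ^ n / of_nat (Suc n) * of_nat (Suc n) = ((-1) ^ n :: rat)"
      by (simp del: of_nat_Suc)
    then have "symfun_const ((-1) ^ n / of_nat (Suc n)) * of_nat (Suc n) = (- 1) ^ n"
      by (metis symfun_const_mult symfun_const_of_nat symfun_const_power symfun_const_minus symfun_const_1)
    then show "euler (symfun_const ((-1) ^ n / of_nat (Suc n)) * u ^ Suc n) = (- u) ^ n * euler u"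
      unfolding euler_symfun_const_mult euler_power power_minus[of u]
      by (simp only: mult.assoc[symmetric])
  qed
  also have "\<dots> = geom u * euler u"
    unfolding geom_def by (rule lfsum_mult_right[OF locally_finite_powers[OF order_ge_minus[OF u]], symmetric])
  finally show ?thesis
    by (simp add: mult.assoc[symmetric] one_plus_mult_geom[OF u])
qed

section \<open>Moebius inversion and the suspended Lie operad\<close>

lemma moebius_1: "moebius 1 = 1"
  by (simp add: moebius_def)

lemma moebius_mult_prime:
  fixes p d :: nat
  assumes p: "prime p" and "\<not> p dvd d" and "d > 0"
  shows "moebius (p * d) = - moebius d"
proof (cases "squarefree d")
  case True
  have "coprime p d"
    using assms by (simp add: prime_imp_coprime)
  then have "squarefree (p * d)"
    using squarefree_mult_coprime squarefree_prime[OF p] True by blast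
  moreover have "prime_factors (p * d) = insert p (prime_factors d)"
    using assms by (simp add: prime_factors_product prime_prime_factors prime_gt_0_nat)
  moreover have "p \<notin> prime_factors d"
    using assms by auto
  ultimately show ?thesis
    using True assms by (simp add: moebius_def prime_gt_0_nat)
next
  case False
  then have "\<not> squarefree (p * d)"
    using squarefree_multD(2) by blast
  then show ?thesis
    using False by (simp add: moebius_def)
qed

lemma moebius_eq_0_if_prime_square_dvd:
  fixes p x :: nat
  assumes "prime p" and "p * p dvd x"
  shows "moebius x = 0"
proof -
  have "\<not> is_unit p"
    using prime_gt_1_nat[OF assms(1)] by simp
  then have "\<not> squarefree x"
    using assms(2) by (auto simp: squarefree_def power2_eq_square)
  then show ?thesis
    by (simp add: moebius_def)
qed

text \<open>For \<open>n > 1\<close> pick a prime \<open>p\<close> dividing \<open>n\<close>: the divisors divisible by \<open>p\<close> that contribute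
  are exactly the \<open>p d\<close> with \<open>d\<close> not divisible by \<open>p\<close>, and they cancel against the \<open>d\<close>.\<close>

lemma sum_moebius_divisors:
  fixes n :: nat
  assumes n: "n > 0"
  shows "(\<Sum>d\<in>{d. d dvd n}. moebius d) = (if n = 1 then 1 else 0)"
proof (cases "n = 1")
  case True
  then have "{d. d dvd n} = {1}"
    by auto
  then show ?thesis
    using True moebius_1 by simp
next
  case False
  obtain p where p: "prime p" "p dvd n"
    using prime_factor_nat[OF False] by blast
  define D1 where "D1 = {d. d dvd n \<and> \<not> p dvd d}"
  define D2 where "D2 = {d. d dvd n \<and> p dvd d}"
  have finite: "finite D1" "finite D2"
    using n unfolding D1_def D2_def by (auto intro: finite_subset[OF _ finite_divisors_nat])
  have divisors: "{d. d dvd n} = D1 \<union> D2" "D1 \<inter> D2 = {}"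
    unfolding D1_def D2_def by auto
  have image: "(\<lambda>d. p * d) ` D1 \<subseteq> D2"
    using p by (auto simp: D1_def D2_def prime_imp_coprime divides_mult)
  have rest: "moebius x = 0" if "x \<in> D2 - (\<lambda>d. p * d) ` D1" for x
  proof -
    from that obtain e where e: "x = p * e" "x dvd n"
      by (auto simp: D2_def)
    then have "p dvd e"
      using that by (auto simp: D1_def intro: dvd_mult_right)
    then show ?thesis
      using moebius_eq_0_if_prime_square_dvd[OF p(1)] e(1) by (simp add: mult_dvd_mono)
  qed
  have "(\<Sum>d\<in>D2. moebius d) = (\<Sum>d\<in>(\<lambda>d. p * d) ` D1. moebius d)"
    by (rule sum.mono_neutral_right[OF finite(2) image]) (use rest in blast)
  also have "\<dots> = (\<Sum>d\<in>D1. moebius (p * d))"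
    by (rule sum.reindex[unfolded o_def]) (use p(1) in \<open>auto simp: inj_on_def prime_gt_0_nat\<close>)
  also have "\<dots> = (\<Sum>d\<in>D1. - moebius d)"
    by (rule sum.cong[OF refl], rule moebius_mult_prime[OF p(1)])
       (use n in \<open>auto simp: D1_def intro: Nat.gr0I\<close>)
  also have "\<dots> = - (\<Sum>d\<in>D1. moebius d)"
    by (rule sum_negf)
  finally show ?thesis
    unfolding divisors(1) using sum.union_disjoint[OF finite divisors(2), of moebius] False by simp
qed

lemma sum_moebius_Suc_dvd:
  "(\<Sum>k\<le>n. if Suc k dvd Suc n then (of_int (moebius (Suc k)) :: rat) else 0) = (if n = 0 then 1 else 0)"
proof -
  have "{d. d dvd Suc n} = Suc ` {k \<in> {..n}. Suc k dvd Suc n}"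
  proof
    show "{d. d dvd Suc n} \<subseteq> Suc ` {k \<in> {..n}. Suc k dvd Suc n}"
    proof
      fix d
      assume "d \<in> {d. d dvd Suc n}"
      then have "d dvd Suc n" "d > 0" "d \<le> Suc n"
        using dvd_imp_le by (auto intro: Nat.gr0I)
      then show "d \<in> Suc ` {k \<in> {..n}. Suc k dvd Suc n}"
        by (intro image_eqI[of _ _ "d - 1"]) auto
    qed
  qed auto
  then have "(\<Sum>d\<in>{d. d dvd Suc n}. moebius d) = (\<Sum>k\<in>{k \<in> {..n}. Suc k dvd Suc n}. moebius (Suc k))"
    by (simp add: sum.reindex)
  also have "\<dots> = (\<Sum>k\<le>n. if Suc k dvd Suc n then moebius (Suc k) else 0)"
    by (rule sum.inter_filter) simp
  finally have "(\<Sum>k\<le>n. if Suc k dvd Suc n then moebius (Suc k) else 0) = (if n = 0 then 1 else 0)"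
    using sum_moebius_divisors[of "Suc n"] by simp
  moreover have "(\<Sum>k\<le>n. if Suc k dvd Suc n then (of_int (moebius (Suc k)) :: rat) else 0) =
      of_int (\<Sum>k\<le>n. if Suc k dvd Suc n then moebius (Suc k) else 0)"
    unfolding of_int_sum by (rule sum.cong) auto
  ultimately show ?thesis
    by simp
qed

lemma inj_Suc_mult_Suc_minus_1: "inj (\<lambda>(k, j). (Suc k * Suc j - 1, k))"
proof (rule injI)
  fix p q :: "nat \<times> nat"
  assume eq: "(\<lambda>(k, j). (Suc k * Suc j - 1, k)) p = (\<lambda>(k, j). (Suc k * Suc j - 1, k)) q"
  obtain k j k' j' where pq: "p = (k, j)" "q = (k', j')"
    by fastforce
  then have "k' = k" "Suc k * Suc j = Suc k * Suc j'"
    using eq by auto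
  then show "p = q"
    using pq mult_left_cancel[of "Suc k" "Suc j" "Suc j'"] by simp
qed

lemma lfsum_reindex_multiples:
  "lfsum (\<lambda>(k, j). H k (Suc k * Suc j)) = lfsum (\<lambda>(n, k). if Suc k dvd Suc n then H k (Suc n) else 0)"
  (is "_ = lfsum ?V")
proof -
  let ?g = "\<lambda>(k, j). (Suc k * Suc j - 1, k)"
  have "inj ?g"
    by (rule inj_Suc_mult_Suc_minus_1)
  moreover have "?V q = 0" if "q \<notin> range ?g" for q
  proof -
    obtain n k where q: "q = (n, k)"
      by (cases q)
    have "\<not> Suc k dvd Suc n"
    proof
      assume "Suc k dvd Suc n"
      then obtain r where r: "Suc n = Suc k * r"
        by (auto elim: dvdE)
      then have "q = ?g (k, r - 1)"
        using q by (cases r) auto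
      then show False
        using that by blast
    qed
    then show ?thesis
      by (simp add: q)
  qed
  ultimately have "lfsum ?V = lfsum (\<lambda>p. ?V (?g p))"
    by (rule lfsum_reindex_inj)
  also have "\<dots> = lfsum (\<lambda>(k, j). H k (Suc k * Suc j))"
  proof (rule lfsum_cong)
    fix p :: "nat \<times> nat"
    obtain k j where p: "p = (k, j)"
      by fastforce
    have n: "Suc (Suc k * Suc j - 1) = Suc k * Suc j"
      by simp
    show "?V (?g p) = (\<lambda>(k, j). H k (Suc k * Suc j)) p"
      unfolding p case_prod_conv n using dvd_triv_left[of "Suc k" "Suc j"] by (rule if_P)
  qed
  finally show ?thesis ..
qed

lemma symfun_const_sum: "symfun_const (sum f A) = (\<Sum>a\<in>A. symfun_const (f a))"
  by (induct A rule: infinite_finite_induct) (simp_all add: symfun_const_add)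

lemma finite_Suc_mult_Suc_le: "finite {p :: nat \<times> nat. Suc (fst p) * Suc (snd p) \<le> n}"
proof (rule finite_subset[OF _ finite_cartesian_product[OF finite_lessThan[of n] finite_lessThan[of n]]])
  show "{p :: nat \<times> nat. Suc (fst p) * Suc (snd p) \<le> n} \<subseteq> {..<n} \<times> {..<n}"
  proof
    fix p :: "nat \<times> nat"
    assume "p \<in> {p. Suc (fst p) * Suc (snd p) \<le> n}"
    moreover have "Suc (fst p) \<le> Suc (fst p) * Suc (snd p)" "Suc (snd p) \<le> Suc (fst p) * Suc (snd p)"
      by simp_all
    ultimately show "p \<in> {..<n} \<times> {..<n}"
      by (cases p) auto
  qed
qed

lemma finite_max_Suc_le: "finite {p :: nat \<times> nat. max (Suc (fst p)) (Suc (snd p)) \<le> n}"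
  by (rule finite_subset[OF _ finite_cartesian_product[OF finite_lessThan[of n] finite_lessThan[of n]]])
     auto

lemma locally_finite_adams_mult_pairs:
  assumes F: "order_ge F 1"
  shows "locally_finite (\<lambda>(k, j). symfun_const (c k) * adams (Suc k * Suc j) F)"
proof (rule locally_finite_if_order_ge[of _ "\<lambda>p. Suc (fst p) * Suc (snd p)", OF _ finite_Suc_mult_Suc_le])
  fix p :: "nat \<times> nat"
  show "order_ge ((\<lambda>(k, j). symfun_const (c k) * adams (Suc k * Suc j) F) p) (Suc (fst p) * Suc (snd p))"
    using order_ge_adams[OF _ F, of "Suc (fst p) * Suc (snd p)"]
    by (cases p) (simp add: order_ge_symfun_const_mult)
qed

lemma locally_finite_adams_divisor_pairs:
  assumes F: "order_ge F 1"
  shows "locally_finite (\<lambda>(n, k). if Suc k dvd Suc n then symfun_const (c k) * adams (Suc n) F else 0)"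
proof (rule locally_finite_if_order_ge[of _ "\<lambda>p. max (Suc (fst p)) (Suc (snd p))", OF _ finite_max_Suc_le])
  fix p :: "nat \<times> nat"
  obtain n k where p: "p = (n, k)"
    by fastforce
  show "order_ge ((\<lambda>(n, k). if Suc k dvd Suc n then symfun_const (c k) * adams (Suc n) F else 0) p)
      (max (Suc (fst p)) (Suc (snd p)))"
  proof (cases "Suc k dvd Suc n")
    case True
    then have "Suc k \<le> Suc n"
      by (rule dvd_imp_le) simp
    then have "max (Suc n) (Suc k) = Suc n"
      by (rule max_absorb1)
    then show ?thesis
      using True order_ge_adams_Suc[OF F, of n] by (simp add: p order_ge_symfun_const_mult)
  qed (simp add: p)
qed

lemma moebius_adams_sum:
  assumes F: "order_ge F 1"
  shows "lfsum (\<lambda>k. symfun_const (of_int (moebius (Suc k))) * adams (Suc k) (adams_sum F)) = F"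
proof -
  let ?mu = "\<lambda>k. symfun_const (of_int (moebius (Suc k)))"
  let ?V = "\<lambda>(n, k). if Suc k dvd Suc n then ?mu k * adams (Suc n) F else 0"
  have rows: "lfsum (\<lambda>k. ?V (n, k)) = (if n = 0 then F else 0)" for n
  proof -
    have "lfsum (\<lambda>k. ?V (n, k)) = (\<Sum>k\<le>n. ?V (n, k))"
      by (rule lfsum_finite) (auto dest: dvd_imp_le)
    also have "\<dots> = symfun_const (\<Sum>k\<le>n. if Suc k dvd Suc n then of_int (moebius (Suc k)) else 0) *
        adams (Suc n) F"
      by (auto simp: symfun_const_sum sum_distrib_right intro: sum.cong)
    also have "\<dots> = (if n = 0 then F else 0)"
      by (simp add: sum_moebius_Suc_dvd)
    finally show ?thesis .
  qed
  have "lfsum (\<lambda>k. ?mu k * adams (Suc k) (adams_sum F)) =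
      lfsum (\<lambda>k. lfsum (\<lambda>j. ?mu k * adams (Suc k * Suc j) F))"
    unfolding adams_sum_def
    by (simp add: lfsum_adams adams_adams lfsum_symfun_const_mult del: mult_Suc mult_Suc_right)
  also have "\<dots> = lfsum (\<lambda>(k, j). ?mu k * adams (Suc k * Suc j) F)"
    using lfsum_pair locally_finite_adams_mult_pairs[OF F] by fastforce
  also have "\<dots> = lfsum ?V"
    by (rule lfsum_reindex_multiples[where H = "\<lambda>k m. ?mu k * adams m F"])
  also have "\<dots> = lfsum (\<lambda>n. lfsum (\<lambda>k. ?V (n, k)))"
    using lfsum_pair[of "\<lambda>n k. ?V (n, k)"] locally_finite_adams_divisor_pairs[OF F] by simp
  also have "\<dots> = lfsum (\<lambda>n :: nat. if n = 0 then F else 0)"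
    by (simp only: rows)
  also have "\<dots> = F"
    by (rule lfsum_single)
  finally show ?thesis .
qed

lemma sf_susp_Lie_replicate:
  "sf_susp Lie (replicate_mset (Suc n) k) =
     of_int (moebius (Suc k)) / of_nat (Suc k) * ((-1) ^ n / of_nat (Suc n))"
proof -
  have "set_mset (replicate_mset (Suc n) k) = {k}"
    by simp
  then show ?thesis
    by (simp add: sf_susp_def Lie_def)
qed

lemma sf_susp_Lie_eq_0:
  assumes "lam \<notin> range (\<lambda>(k, n). replicate_mset (Suc n) k)"
  shows "sf_susp Lie lam = 0"
proof -
  have "\<not> (lam \<noteq> {#} \<and> (\<exists>j. set_mset lam = {j}))"
  proof
    assume "lam \<noteq> {#} \<and> (\<exists>j. set_mset lam = {j})"
    then obtain j where "set_mset lam = {j}"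
      by blast
    then have "lam = (\<lambda>(k, n). replicate_mset (Suc n) k) (j, size lam - 1)"
      using eq_replicate_mset_if_set_mset_eq_singleton by simp
    then show False
      using assms by blast
  qed
  then have "Lie lam = 0"
    unfolding Lie_def by (rule if_not_P)
  then show ?thesis
    by (simp add: sf_susp_def)
qed

text \<open>Flipping signs turns the terms \<open>-ln (1 - p\<^sub>k)\<close> of \<open>Lie\<close> into \<open>ln (1 + p\<^sub>k)\<close>.\<close>

lemma pleth_susp_Lie:
  assumes Y: "order_ge Y 1"
  shows "pleth (sf_susp Lie) Y =
    lfsum (\<lambda>k. symfun_const (of_int (moebius (Suc k)) / of_nat (Suc k)) * ln1p (adams (Suc k) Y))"
proof -
  let ?h = "\<lambda>(k, n). replicate_mset (Suc n) k"
  let ?c = "\<lambda>k. symfun_const (of_int (moebius (Suc k)) / of_nat (Suc k))"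
  let ?T = "\<lambda>k n. ?c k * (symfun_const ((-1) ^ n / of_nat (Suc n)) * adams (Suc k) Y ^ Suc n)"
  have "inj ?h"
    by (auto simp: inj_def replicate_mset_eq_iff simp del: replicate_mset_Suc)
  moreover have "symfun_const (sf_susp Lie lam) * pleth_monom lam Y = 0" if "lam \<notin> range ?h" for lam
    using sf_susp_Lie_eq_0[OF that] by simp
  ultimately have "pleth (sf_susp Lie) Y =
      lfsum (\<lambda>p. symfun_const (sf_susp Lie (?h p)) * pleth_monom (?h p) Y)"
    unfolding pleth_eq_lfsum[OF Y] by (rule lfsum_reindex_inj)
  also have "\<dots> = lfsum (\<lambda>(k, n). ?T k n)"
    by (rule lfsum_cong)
       (auto simp: sf_susp_Lie_replicate pleth_monom_replicate mult.assoc[symmetric]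
         simp flip: symfun_const_mult simp del: replicate_mset_Suc)
  also have "\<dots> = lfsum (\<lambda>k. lfsum (?T k))"
  proof (rule lfsum_pair[symmetric],
      rule locally_finite_if_order_ge[of _ "\<lambda>p. Suc (fst p) * Suc (snd p)", OF _ finite_Suc_mult_Suc_le])
    fix p :: "nat \<times> nat"
    have "order_ge (adams (Suc (fst p)) Y ^ Suc (snd p)) (Suc (snd p) * Suc (fst p))"
      by (rule order_ge_power[OF order_ge_adams_Suc[OF Y]])
    then show "order_ge ((\<lambda>(k, n). ?T k n) p) (Suc (fst p) * Suc (snd p))"
      by (cases p) (simp add: order_ge_symfun_const_mult mult.commute)
  qed
  also have "\<dots> = lfsum (\<lambda>k. ?c k * ln1p (adams (Suc k) Y))"
    by (simp add: ln1p_def lfsum_symfun_const_mult)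
  finally show ?thesis .
qed

lemma euler_ln1p_adams_pleth_Comm:
  assumes X: "order_ge X 1"
  shows "euler (ln1p (adams (Suc k) (pleth Comm X))) = of_nat (Suc k) * adams (Suc k) (adams_sum (euler X))"
proof -
  let ?u = "adams (Suc k) (pleth Comm X)"
  have u: "order_ge ?u 1"
    by (rule order_ge_mono[OF order_ge_adams_Suc[OF order_ge_pleth_Comm]]) simp
  have "(1 + ?u) * euler (ln1p ?u) = euler ?u"
    by (rule euler_ln1p[OF u])
  also have "\<dots> = (1 + ?u) * (of_nat (Suc k) * adams (Suc k) (adams_sum (euler X)))"
    by (simp add: euler_adams euler_pleth_Comm[OF X] adams_mult adams_add adams_1 ac_simps
        del: of_nat_Suc)
  finally show ?thesis
    by (rule one_plus_mult_cancel[OF u])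
qed

lemma pleth_susp_Lie_pleth_Comm:
  assumes X: "order_ge X 1"
  shows "pleth (sf_susp Lie) (pleth Comm X) = X"
proof (rule euler_eqI)
  have "euler (pleth (sf_susp Lie) (pleth Comm X)) =
      lfsum (\<lambda>k. symfun_const (of_int (moebius (Suc k)) / of_nat (Suc k)) *
        euler (ln1p (adams (Suc k) (pleth Comm X))))"
    by (simp add: pleth_susp_Lie[OF order_ge_pleth_Comm] lfsum_euler euler_symfun_const_mult)
  also have "\<dots> = lfsum (\<lambda>k. symfun_const (of_int (moebius (Suc k))) * adams (Suc k) (adams_sum (euler X)))"
  proof (rule lfsum_cong)
    fix k
    have "of_int (moebius (Suc k)) / of_nat (Suc k) * of_nat (Suc k) = (of_int (moebius (Suc k)) :: rat)"
      by (simp del: of_nat_Suc)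
    then show "symfun_const (of_int (moebius (Suc k)) / of_nat (Suc k)) *
        euler (ln1p (adams (Suc k) (pleth Comm X))) =
        symfun_const (of_int (moebius (Suc k))) * adams (Suc k) (adams_sum (euler X))"
      unfolding euler_ln1p_adams_pleth_Comm[OF X]
      by (metis mult.assoc symfun_const_mult symfun_const_of_nat)
  qed
  also have "\<dots> = euler X"
    by (rule moebius_adams_sum[OF order_ge_euler[OF X]])
  finally show "euler (pleth (sf_susp Lie) (pleth Comm X)) = euler X" .
  show "coeff (pleth (sf_susp Lie) (pleth Comm X)) {#} = coeff X {#}"
    using X[unfolded order_ge_1_iff] by (simp add: coeff_pleth_empty sf_susp_def Lie_def)
qed

section \<open>The equation \<open>X (1 + Comm \<circ> X) = p\<^sub>1\<close>\<close>

definition eq_upto :: "nat \<Rightarrow> symfun \<Rightarrow> symfun \<Rightarrow> bool" where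
  "eq_upto n f g \<longleftrightarrow> (\<forall>m. sf_wt m \<le> n \<longrightarrow> coeff f m = coeff g m)"

lemma eq_upto_refl: "eq_upto n f f"
  by (simp add: eq_upto_def)

lemma eq_upto_mult:
  assumes "eq_upto n f f'" "eq_upto n g g'"
  shows "eq_upto n (f * g) (f' * g')"
  using assms by (auto simp: eq_upto_def coeff_mult intro!: sum.cong)

lemma eq_upto_adams:
  assumes "eq_upto n f g" "k > 0"
  shows "eq_upto n (adams k f) (adams k g)"
  unfolding eq_upto_def
proof (intro allI impI)
  fix m
  assume m: "sf_wt m \<le> n"
  show "coeff (adams k f) m = coeff (adams k g) m"
  proof (cases "m \<in> range (scale_parts k)")
    case True
    then obtain a where a: "m = scale_parts k a"
      by auto
    then have "sf_wt a \<le> sf_wt m"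
      using assms(2) by (simp add: sf_wt_scale_parts)
    then show ?thesis
      using a assms m by (simp add: eq_upto_def)
  qed (simp add: coeff_adams_not_in_range)
qed

lemma eq_upto_pleth_monom: "eq_upto n W W' \<Longrightarrow> eq_upto n (pleth_monom lam W) (pleth_monom lam W')"
  by (induct lam) (simp_all add: eq_upto_refl eq_upto_mult eq_upto_adams)

lemma eq_upto_pleth: "eq_upto n W W' \<Longrightarrow> eq_upto n (pleth g W) (pleth g W')"
  using eq_upto_pleth_monom by (auto simp: eq_upto_def coeff_pleth)

lemma eq_upto_Suc_mult:
  assumes "order_ge f 1" "order_ge g 1" "order_ge f' 1" "order_ge g' 1"
    and "eq_upto n f f'" "eq_upto n g g'"
  shows "eq_upto (Suc n) (f * g) (f' * g')"
  unfolding eq_upto_def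
proof (intro allI impI)
  fix m
  assume m: "sf_wt m \<le> Suc n"
  have "coeff f (fst p) * coeff g (snd p) = coeff f' (fst p) * coeff g' (snd p)"
    if p: "p \<in> splittings m" for p
  proof (cases "fst p = {#} \<or> snd p = {#}")
    case True
    then show ?thesis
      using assms(1-4)[unfolded order_ge_1_iff] by auto
  next
    case False
    from p have "m = fst p + snd p"
      by simp
    with m have "sf_wt (fst p) + sf_wt (snd p) \<le> Suc n"
      by simp
    moreover have "sf_wt (fst p) \<noteq> 0" "sf_wt (snd p) \<noteq> 0"
      using False by simp_all
    ultimately have "sf_wt (fst p) \<le> n" "sf_wt (snd p) \<le> n"
      by arith+
    then show ?thesis
      using assms(5,6) by (simp add: eq_upto_def)
  qed
  then show "coeff (f * g) m = coeff (f' * g') m"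
    by (simp add: coeff_mult)
qed

lemma pleth_Comm_equation_unique:
  assumes X: "order_ge X 1" and Y: "order_ge Y 1"
    and "X * (1 + pleth Comm X) = power_sum 1" and "Y * (1 + pleth Comm Y) = power_sum 1"
  shows "X = Y"
proof -
  have X_eq: "X = power_sum 1 - X * pleth Comm X" and Y_eq: "Y = power_sum 1 - Y * pleth Comm Y"
    using assms(3,4) by (simp_all add: algebra_simps)
  have "eq_upto n X Y" for n
  proof (induct n)
    case 0
    show ?case
      using X Y by (simp add: eq_upto_def order_ge_1_iff[unfolded One_nat_def])
  next
    case (Suc n)
    then have "eq_upto (Suc n) (X * pleth Comm X) (Y * pleth Comm Y)"
      by (intro eq_upto_Suc_mult eq_upto_pleth X Y order_ge_pleth_Comm)
    then show ?case
      by (subst X_eq, subst Y_eq) (simp add: eq_upto_def)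
  qed
  then show ?thesis
    by (intro symfun_eqI) (auto simp: eq_upto_def)
qed

lemma p1_minus_HALpa_equation:
  assumes "a = power_sum 1 * pleth sf_p1_over_1_plus_p1 (pleth Comm (power_sum 1 - a))"
  shows "order_ge (power_sum 1 - a) 1"
    and "(power_sum 1 - a) * (1 + pleth Comm (power_sum 1 - a)) = power_sum 1"
proof -
  let ?X = "power_sum 1 - a"
  let ?C = "pleth Comm ?X"
  have p1: "order_ge (power_sum 1) 1"
    by (simp add: order_ge_power_sum)
  then show X: "order_ge ?X 1"
    by (subst assms) (intro order_ge_diff order_ge_mult_left)
  have "a * (1 + ?C) = power_sum 1 * ((1 + ?C) * pleth sf_p1_over_1_plus_p1 ?C)"
    using arg_cong[OF assms, of "\<lambda>x. x * (1 + ?C)"] by (simp only: ac_simps)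
  also have "\<dots> = power_sum 1 * ?C"
    by (simp only: pleth_p1_over_1_plus_p1[OF order_ge_pleth_Comm])
  finally have "?X * (1 + ?C) = power_sum 1 * (1 + ?C) - power_sum 1 * ?C"
    by (simp add: algebra_simps)
  also have "\<dots> = power_sum 1"
    by (simp add: algebra_simps)
  finally show "?X * (1 + ?C) = power_sum 1" .
qed

lemma minus_sign_flip_PreLie_equation:
  assumes "P = power_sum 1 * (1 + pleth Comm P)"
  shows "order_ge (- sign_flip P) 1"
    and "(- sign_flip P) * (1 + pleth Comm (- sign_flip P)) = power_sum 1"
proof -
  have P: "order_ge P 1"
    by (subst assms) (simp add: order_ge_mult_left order_ge_power_sum)
  then show Z: "order_ge (- sign_flip P) 1"
    by (intro order_ge_minus order_ge_sign_flip)
  have "- sign_flip P = power_sum 1 * (1 + pleth Comm (sign_flip P))"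
    by (subst assms) (simp add: sign_flip_mult sign_flip_pleth[OF P])
  from arg_cong[OF this, of "\<lambda>x. x * (1 + pleth Comm (- sign_flip P))"]
  have "(- sign_flip P) * (1 + pleth Comm (- sign_flip P)) =
      power_sum 1 * ((1 + pleth Comm (sign_flip P)) * (1 + pleth Comm (- sign_flip P)))"
    by (simp only: mult.assoc)
  also have "\<dots> = power_sum 1"
    by (simp add: pleth_Comm_inverse[OF order_ge_sign_flip[OF P]])
  finally show "(- sign_flip P) * (1 + pleth Comm (- sign_flip P)) = power_sum 1" .
qed

lemma HAL_eq_sign_flip_M:
  fixes a b c hal P q M :: symfun
  assumes hpa: "a = power_sum 1 * pleth sf_p1_over_1_plus_p1 (pleth Comm (power_sum 1 - a))"
    and hp: "b = power_sum 1 * pleth (sf_susp Lie) (pleth Comm (power_sum 1 - a))"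
    and ha: "c = pleth (sf_sub Comm (sf_p 1)) (power_sum 1 - a)"
    and h: "hal = b + c - a"
    and hP: "P = power_sum 1 * (1 + pleth Comm P)"
    and hQ: "q * (1 + pleth Comm P) = 1"
    and hM: "M + 1 = power_sum 1 + power_sum 1 * P + q"
  shows "hal = sign_flip M"
proof -
  define X where "X = power_sum 1 - a"
  define C where "C = pleth Comm X"
  have X: "order_ge X 1" and XC: "X * (1 + C) = power_sum 1"
    using p1_minus_HALpa_equation[OF hpa] by (simp_all add: X_def C_def)
  have P: "order_ge P 1"
    by (subst hP) (simp add: order_ge_mult_left order_ge_power_sum)
  have X_eq: "X = - sign_flip P"
    using pleth_Comm_equation_unique[OF X _ XC[unfolded C_def]] minus_sign_flip_PreLie_equation[OF hP]
    by blast
  have b: "b = power_sum 1 * X"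
    using hp[folded X_def] by (simp only: pleth_susp_Lie_pleth_Comm[OF X])
  have c: "c = C - X"
    using ha[folded X_def] by (simp only: pleth_sub pleth_power_sum_1[OF X] C_def)
  have hal_eq: "hal = power_sum 1 * X + C - power_sum 1"
    unfolding h b c using X_def by (simp add: algebra_simps)
  have q: "sign_flip q * (1 + pleth Comm (sign_flip P)) = 1"
    using arg_cong[OF hQ, of sign_flip] by (simp add: sign_flip_mult sign_flip_pleth[OF P])
  have "sign_flip q = sign_flip q * ((1 + pleth Comm (sign_flip P)) * (1 + C))"
    using pleth_Comm_inverse[OF order_ge_sign_flip[OF P]] by (simp add: C_def X_eq)
  also have "\<dots> = 1 + C"
    by (simp only: mult.assoc[symmetric] q mult_1)
  finally have flipped_q: "sign_flip q = 1 + C" .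
  have "sign_flip M + 1 = - power_sum 1 + power_sum 1 * X + sign_flip q"
    using arg_cong[OF hM, of sign_flip] by (simp add: sign_flip_mult X_eq)
  then show ?thesis
    by (simp add: hal_eq flipped_q algebra_simps)
qed

theorem mainTheorem5:
  fixes HALpa HALp HALa HAL PreLie Q M :: sf
  assumes hpa: "HALpa = sf_mult (sf_p 1)
      (sf_pleth sf_p1_over_1_plus_p1 (sf_pleth Comm (sf_sub (sf_p 1) HALpa)))"
    and hp: "HALp = sf_mult (sf_p 1)
      (sf_pleth (sf_susp Lie) (sf_pleth Comm (sf_sub (sf_p 1) HALpa)))"
    and ha: "HALa = sf_pleth (sf_sub Comm (sf_p 1)) (sf_sub (sf_p 1) HALpa)"
    and h: "HAL = sf_sub (sf_add HALp HALa) HALpa"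
    and hPreLie: "PreLie = sf_mult (sf_p 1) (sf_add (sf_const 1) (sf_pleth Comm PreLie))"
    and hQ: "sf_mult Q (sf_add (sf_const 1) (sf_pleth Comm PreLie)) = sf_const 1"
    and hM: "sf_add M (sf_const 1) = sf_add (sf_add (sf_p 1) (sf_mult (sf_p 1) PreLie)) Q"
  shows "HAL = sf_neg (sf_susp M)"
proof -
  note Abs_symfun_simps = Abs_symfun_sf_mult Abs_symfun_sf_add Abs_symfun_sf_sub
    Abs_symfun_sf_const_1 Abs_symfun_sf_p Abs_symfun_sf_pleth
  have "Abs_symfun HAL = sign_flip (Abs_symfun M)"
    by (rule HAL_eq_sign_flip_M[of "Abs_symfun HALpa" "Abs_symfun HALp" "Abs_symfun HALa" _
          "Abs_symfun PreLie" "Abs_symfun Q"])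
       (use assms[THEN arg_cong[where f = Abs_symfun]] in \<open>simp_all only: Abs_symfun_simps\<close>)
  then show ?thesis
    by (simp add: Abs_symfun_inject flip: Abs_symfun_sf_neg_sf_susp)
qed

end
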